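(* Let $k\ge 3$ and $\frac1k<r_0<\frac1{k-1}$, and let $\sigma_k$, the lenses $L_j$ and the counts $m_j=\#(\mathcal P_\lambda\cap L_j)$, $j=1,\dots,k-1$, be as in the context. Then for every integer $n\ge 0$, $$\mathbb P\big(\sigma_k=n \,\big|\, m_1,\dots,m_{k-1}\big)=\frac{1}{\binom{m_1+\cdots+m_{k-1}}{m_1,\ldots,m_{k-1}}}\sum_{w\in\mathcal P(\mathcal M_{k-2})}\ \sum_{\substack{\Pi\in\mathcal P([m_{k-2}\times m_{k-1}])\\ S(w)\cdot\pi^\star(\Pi)=n}}\ \prod_{r=0}^{m_{k-2}}\binom{\pi^\star(\Pi)(r)+\sum_{l=1}^{k-3}\pi^\star_{k-2,l}(w)(r)}{\pi^\star(\Pi)(r)},$$ where the outer sum runs over words in $\mathcal P(\mathcal M_{k-2})$ built from the counts $m_1,\dots,m_{k-2}$ (an empty sum over $l$ equals $0$).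
   Context: Fix $\lambda>0$. Let $\mathcal P_\lambda$ be a homogeneous Poisson point process of intensity $\lambda$ on $[0,1]$. Set $V=\mathcal P_\lambda\cup\{0,1\}$ and let $G$ be the graph on $V$ in which distinct $x,y$ are adjacent iff $|x-y|<r_0$. A $k$-hop path from $0$ to $1$ is a sequence of vertices $0=v_0,v_1,\dots,v_k=1$ of $G$ with $v_{i-1}$ adjacent to $v_i$ for all $i$. $\sigma_k$ denotes the number of such paths. For $j=1,\dots,k-1$, the lens is $L_j=(1-(k-j)r_0,\; j r_0)$. Under $\frac1k<r_0<\frac1{k-1}$ these are pairwise disjoint intervals of length $kr_0-1>0$. Set $m_j=\#(\mathcal P_\lambda\cap L_j)$. Words / lattice paths: for nonnegative integers $m_1,\dots,m_d$, $\mathcal P(\mathcal M_d)$ is the set of words of length $m_1+\dots+m_d$ in letters $e_1,\dots,e_d$ containing exactly $m_i$ copies of $e_i$. Equivalently, these are lattice paths with unit steps $e_i$ from $\mathbf 0$ to $(m_1,\dots,m_d)$ in $\{0,\dots,m_1\}\times\cdots\times\{0,\dots,m_d\}$. For a word $w$ and $i\neq j$, write $\pi_{i,j}(w)(s)$, $s=1,\dots,m_j$, for the number of occurrences of $e_i$ in $w$ preceding the $s$-th occurrence of $e_j$. Its multiplicity function is $\pi^\star_{i,j}(w)(r)=\#\{s:\pi_{i,j}(w)(s)=r\}$ for $r=0,\dots,m_i$. In particular, $\pi^\star_{k-2,l}(w)(r)$ is the number of letters $e_l$ lying strictly after the $r$-th and before the $(r+1)$-th occurrence of $e_{k-2}$.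 For $w\in\mathcal P(\mathcal M_d)$ and $t=0,\dots,m_d$, $S_t(w)$ is the number of $d$-tuples of positions $p_1<\dots<p_d$ in $w$ such that the letter at $p_i$ is $e_i$ for each $i$, and $p_d$ is at or before the $t$-th occurrence of $e_d$. So $S_0=0$, and for $d=1$, $S_t=t$. Write $S(w)=(S_0(w),\dots,S_{m_d}(w))$. $\mathcal P([m_{k-2}\times m_{k-1}])$ is the set of words with $m_{k-2}$ letters $a$ and $m_{k-1}$ letters $b$. For such $\Pi$, $\pi(\Pi)(s)$ is the number of $a$'s preceding the $s$-th $b$ ($s=1,\dots,m_{k-1}$), and $\pi^\star(\Pi)(r)=\#\{s:\pi(\Pi)(s)=r\}$ for $r=0,\dots,m_{k-2}$. The dot product is $S(w)\cdot\pi^\star(\Pi)=\sum_{r=0}^{m_{k-2}}S_r(w)\,\pi^\star(\Pi)(r)$. The multinomial coefficient is $\binom{m_1+\cdots+m_{k-1}}{m_1,\ldots,m_{k-1}}=\frac{(m_1+\dots+m_{k-1})!}{m_1!\cdots m_{k-1}!}$. *)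

theory Defs
  imports "HOL-Probability.Probability"
begin

text \<open>Sample space of the Poisson point process of intensity lam on [0,1]:
  a Poisson(lam) number N of points and an i.i.d. sequence X of Uniform[0,1]
  positions; the process is the point set X ` {..<N}.\<close>

definition PPP :: "real \<Rightarrow> (nat \<times> (nat \<Rightarrow> real)) measure" where
  "PPP lam = pair_measure (measure_pmf (poisson_pmf lam))
      (PiM UNIV (\<lambda>_::nat. uniform_measure lborel {0..1::real}))"

definition points :: "nat \<times> (nat \<Rightarrow> real) \<Rightarrow> real set" where
  "points \<omega> = snd \<omega> ` {..<fst \<omega>}"

definition vertices :: "nat \<times> (nat \<Rightarrow> real) \<Rightarrow> real set" where
  "vertices \<omega> = points \<omega> \<union> {0, 1}"

definition adj :: "real \<Rightarrow> real \<Rightarrow> real \<Rightarrow> bool" where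
  "adj r0 x y \<longleftrightarrow> x \<noteq> y \<and> \<bar>x - y\<bar> < r0"

definition hop_paths :: "real \<Rightarrow> nat \<Rightarrow> nat \<times> (nat \<Rightarrow> real) \<Rightarrow> real list set" where
  "hop_paths r0 k \<omega> = {vs. length vs = Suc k \<and> set vs \<subseteq> vertices \<omega> \<and>
      vs ! 0 = 0 \<and> vs ! k = 1 \<and> (\<forall>i<k. adj r0 (vs ! i) (vs ! Suc i))}"

definition sigma_k :: "real \<Rightarrow> nat \<Rightarrow> nat \<times> (nat \<Rightarrow> real) \<Rightarrow> nat" where
  "sigma_k r0 k \<omega> = card (hop_paths r0 k \<omega>)"

definition lens :: "real \<Rightarrow> nat \<Rightarrow> nat \<Rightarrow> real set" where
  "lens r0 k j = {1 - real (k - j) * r0 <..< real j * r0}"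

definition lens_count :: "real \<Rightarrow> nat \<Rightarrow> nat \<Rightarrow> nat \<times> (nat \<Rightarrow> real) \<Rightarrow> nat" where
  "lens_count r0 k j \<omega> = card (points \<omega> \<inter> lens r0 k j)"

text \<open>Words of P(M_d) for counts c 1, ..., c d: letter e_i is encoded as the number i.\<close>
definition words :: "nat \<Rightarrow> (nat \<Rightarrow> nat) \<Rightarrow> nat list set" where
  "words d c = {w. set w \<subseteq> {1..d} \<and> (\<forall>i\<in>{1..d}. count_list w i = c i)}"

text \<open>Position (0-based index) of the s-th occurrence (s \<ge> 1) of letter a in w.\<close>
definition nth_occ :: "'a list \<Rightarrow> 'a \<Rightarrow> nat \<Rightarrow> nat" where
  "nth_occ w a s = [p \<leftarrow> [0..<length w]. w ! p = a] ! (s - 1)"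

definition pi_ij :: "'a \<Rightarrow> 'a \<Rightarrow> 'a list \<Rightarrow> nat \<Rightarrow> nat" where
  "pi_ij i j w s = count_list (take (nth_occ w j s) w) i"

definition pi_star :: "'a \<Rightarrow> 'a \<Rightarrow> 'a list \<Rightarrow> nat \<Rightarrow> nat" where
  "pi_star i j w r = card {s \<in> {1..count_list w j}. pi_ij i j w s = r}"

definition S_count :: "nat \<Rightarrow> nat list \<Rightarrow> nat \<Rightarrow> nat" where
  "S_count d w t = card {p. p \<in> {1..d} \<rightarrow>\<^sub>E {..<length w} \<and>
      (\<forall>i\<in>{1..d}. w ! (p i) = i) \<and> (\<forall>i\<in>{1..<d}. p i < p (Suc i)) \<and>
      1 \<le> t \<and> p d \<le> nth_occ w d t}"

text \<open>Words Pi in P([ma x mb]): letter a is True, letter b is False.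
  Then pi(Pi) = pi_ij True False Pi and pi*(Pi) = pi_star True False Pi.\<close>
definition words_ab :: "nat \<Rightarrow> nat \<Rightarrow> bool list set" where
  "words_ab ma mb = {P. count_list P True = ma \<and> count_list P False = mb}"

definition multinom :: "nat list \<Rightarrow> real" where
  "multinom ms = fact (sum_list ms) / (\<Prod>m\<leftarrow>ms. fact m)"

end

theory Submission
  imports Defs "HOL-Combinatorics.Multiset_Permutations"
begin

(*
  Condition on the number N of Poisson points, which are then i.i.d. uniform on [0,1]. Measure
  a point in the lens L_j by its offset from the left end a_j = 1 - (k - j) r0 of L_j. Since
  the lenses have width k r0 - 1 < r0, a point of L_j is adjacent to a point of L_(j+1) iff the
  offset of the latter is smaller, and every k-hop path from 0 to 1 visits L_1, ..., L_(k-1)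
  in turn. Listing the points lying in lenses by decreasing offset and recording the lens of each
  point therefore gives a word W with m_j letters j, and sigma_k is the number of subsequences
  1 2 ... (k-1) of W. Translating points from one lens to another preserves the uniform law,
  so given the lens counts W is uniformly distributed among the multinomially many such words.

  Split W into its
  restriction w to the letters 1, ..., k-2 and the pattern Pi of the letters k-2 and k-1. A
  chain ending at a letter k-1 that follows exactly r letters k-2 extends one of the S_r(w)
  chains of w, so the chain count of W is S(w) . pi*(Pi). The words W with given w and Pi are
  obtained by interleaving, for each r, the pi*(Pi)(r) letters k-1 of the r-th gap of Pi with
  the letters below k-2 in the r-th gap of w, which gives the product of binomial coefficients.
*)

section \<open>Positions of letters in words\<close>

definition occ_positions :: "'a list \<Rightarrow> 'a \<Rightarrow> nat list" where
  "occ_positions w a = filter (\<lambda>p. w ! p = a) [0..<length w]"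

lemma nth_occ_eq_occ_positions: "nth_occ w a s = occ_positions w a ! (s - 1)"
  by (simp add: nth_occ_def occ_positions_def)

lemma occ_positions_snoc: "occ_positions (w @ [x]) a = occ_positions w a @ (if x = a then [length w] else [])"
proof -
  have fw: "filter (\<lambda>p. (w @ [x]) ! p = a) [0..<length w] = filter (\<lambda>p. w ! p = a)
    [0..<length w]"
    by (rule filter_cong) (auto simp: nth_append)
  have u: "[0..<length (w @ [x])] = [0..<length w] @ [length w]" by simp
  show ?thesis unfolding occ_positions_def u filter_append using fw
    by (simp add: nth_append)
qed

lemma occ_positions_Nil[simp]: "occ_positions [] a = []"
  by (simp add: occ_positions_def)

lemma length_occ_positions: "length (occ_positions w a) = count_list w a"
  by (induction w rule: rev_induct) (auto simp: occ_positions_snoc)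

lemma set_occ_positions: "set (occ_positions w a) = {p. p < length w \<and> w ! p = a}"
  by (auto simp: occ_positions_def)

lemma sorted_occ_positions: "sorted_wrt (<) (occ_positions w a)"
  unfolding occ_positions_def by (intro sorted_wrt_filter) (simp add: sorted_wrt_upt)

lemma distinct_occ_positions: "distinct (occ_positions w a)"
  unfolding occ_positions_def by simp

lemma occ_positions_append: "occ_positions (u @ v) a = occ_positions u a @ map ((+) (length u))
  (occ_positions v a)"
proof (induction v rule: rev_induct)
  case Nil then show ?case by simp
next
  case (snoc x v)
  have "occ_positions (u @ v @ [x]) a = occ_positions ((u @ v) @ [x]) a" by simp
  also have "\<dots> = occ_positions (u @ v) a @ (if x = a then [length (u @ v)] else [])"
    by (rule occ_positions_snoc)
  finally show ?case using snoc by (simp add: occ_positions_snoc)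
qed

lemma occ_positions_Cons_same: "occ_positions (a # v) a = 0 # map Suc (occ_positions v a)"
  using occ_positions_append[of "[a]" v a] by (simp add: occ_positions_def)

lemma count_list_take_less:
  assumes "q < length w" "w ! q = a"
  shows "count_list (take q w) a < count_list w a"
proof -
  have w: "w = take q w @ a # drop (Suc q) w" by (rule id_take_nth_drop[OF assms(1), unfolded assms(2)])
  have "count_list (take q w @ a # drop (Suc q) w) a = count_list (take q w) a + Suc
    (count_list (drop (Suc q) w) a)"
    by (simp only: count_list_append count_list.simps if_True) simp
  then have "count_list w a = count_list (take q w) a + Suc (count_list (drop (Suc q) w) a)"
    by (simp only: w[symmetric])
  then show ?thesis by simp
qed

lemma count_list_take_le: "count_list (take q w) a \<le> count_list w a"
  by (metis append_take_drop_id count_list_append le_add1)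

lemma occ_positions_nth_count_take:
  assumes "q < length w" "w ! q = a"
  shows "occ_positions w a ! count_list (take q w) a = q"
proof -
  have w: "w = take q w @ (a # drop (Suc q) w)" by (rule id_take_nth_drop[OF assms(1), unfolded assms(2)])
  note oa = occ_positions_append[of "take q w" "a # drop (Suc q) w" a, folded w]
  have len: "length (take q w) = q" using assms by simp
  have e: "occ_positions w a = occ_positions (take q w) a @ map ((+) q) (0 # map Suc
    (occ_positions (drop (Suc q) w) a))"
    by (simp only: oa len occ_positions_Cons_same)
  show ?thesis unfolding e by (simp add: nth_append length_occ_positions)
qed

lemma nth_occ_Suc_count_take:
  assumes "q < length w" "w ! q = a"
  shows "nth_occ w a (Suc (count_list (take q w) a)) = q"
  using occ_positions_nth_count_take[OF assms] by (simp add: nth_occ_eq_occ_positions)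

lemma nth_occ_spec:
  assumes "1 \<le> s" "s \<le> count_list w a"
  shows "nth_occ w a s < length w" "w ! nth_occ w a s = a"
    "count_list (take (nth_occ w a s) w) a = s - 1"
proof -
  have i: "s - 1 < length (occ_positions w a)" using assms by (simp add: length_occ_positions)
  have mem: "nth_occ w a s \<in> set (occ_positions w a)" unfolding nth_occ_eq_occ_positions using i by simp
  then show q1: "nth_occ w a s < length w" and q2: "w ! nth_occ w a s = a" by (auto simp: set_occ_positions)
  let ?q = "nth_occ w a s"
  have c: "count_list (take ?q w) a < length (occ_positions w a)"
    using count_list_take_less[OF q1 q2] by (simp add: length_occ_positions)
  have "occ_positions w a ! count_list (take ?q w) a = occ_positions w a ! (s - 1)"
    using occ_positions_nth_count_take[OF q1 q2] by (simp add: nth_occ_eq_occ_positions)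
  then show "count_list (take ?q w) a = s - 1"
    using nth_eq_iff_index_eq[OF distinct_occ_positions c i] by simp
qed

lemma le_nth_occ_iff:
  assumes "1 \<le> s" "s \<le> count_list w a" "q < length w" "w ! q = a"
  shows "q \<le> nth_occ w a s \<longleftrightarrow> count_list (take q w) a < s"
proof -
  let ?c = "count_list (take q w) a"
  have c: "?c < length (occ_positions w a)" using count_list_take_less[OF assms(3,4)]
    by (simp add: length_occ_positions)
  have i: "s - 1 < length (occ_positions w a)" using assms by (simp add: length_occ_positions)
  have q: "q = occ_positions w a ! ?c" using occ_positions_nth_count_take[OF assms(3,4)] by simp
  have n: "nth_occ w a s = occ_positions w a ! (s - 1)" by (simp add: nth_occ_eq_occ_positions)
  show ?thesis
  proof
    assume "q \<le> nth_occ w a s"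
    show "?c < s"
    proof (rule ccontr)
      assume "\<not> ?c < s"
      then have "s - 1 < ?c" using assms by linarith
      then have "occ_positions w a ! (s - 1) < occ_positions w a ! ?c"
        using sorted_wrt_nth_less[OF sorted_occ_positions[of w a] _ c] by blast
      then show False using \<open>q \<le> nth_occ w a s\<close> q n by simp
    qed
  next
    assume "?c < s"
    then have "?c \<le> s - 1" by linarith
    then show "q \<le> nth_occ w a s"
    proof (cases "?c = s - 1")
      case True then show ?thesis using q n by simp
    next
      case False
      then have "?c < s - 1" using \<open>?c \<le> s - 1\<close> by simp
      then have "occ_positions w a ! ?c < occ_positions w a ! (s - 1)"
        using sorted_wrt_nth_less[OF sorted_occ_positions[of w a] _ i] by blast
      then show ?thesis using q n by simp
    qed
  qed
qed

definition between_count :: "'a \<Rightarrow> 'a \<Rightarrow> 'a list \<Rightarrow> nat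
  \<Rightarrow> nat" where
  "between_count i j w r = card {p. p < length w \<and> w ! p = j \<and> count_list (take p w) i = r}"

lemma pi_star_eq_between_count: "pi_star i j w r = between_count i j w r"
proof -
  let ?A = "{s \<in> {1..count_list w j}. pi_ij i j w s = r}"
  let ?B = "{p. p < length w \<and> w ! p = j \<and> count_list (take p w) i = r}"
  have inj: "inj_on (nth_occ w j) {1..count_list w j}"
  proof
    fix s t assume s: "s \<in> {1..count_list w j}" and t: "t \<in> {1..count_list w j}"
      and e: "nth_occ w j s = nth_occ w j t"
    have "s - 1 = t - 1"
      using nth_occ_spec(3)[of s w j] nth_occ_spec(3)[of t w j] s t e by auto
    then show "s = t" using s t by auto
  qed
  have "nth_occ w j ` ?A = ?B"
  proof
    show "nth_occ w j ` ?A \<subseteq> ?B"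
    proof
      fix p assume "p \<in> nth_occ w j ` ?A"
      then obtain s where s: "s \<in> ?A" and ps: "p = nth_occ w j s" by blast
      have s1: "1 \<le> s" "s \<le> count_list w j" using s by auto
      have "pi_ij i j w s = r" using s by simp
      then have "count_list (take p w) i = r" unfolding pi_ij_def ps .
      then show "p \<in> ?B" using nth_occ_spec(1,2)[OF s1] ps by blast
    qed
  next
    show "?B \<subseteq> nth_occ w j ` ?A"
    proof
      fix p assume p: "p \<in> ?B"
      let ?s = "Suc (count_list (take p w) j)"
      have s1: "?s \<le> count_list w j" using count_list_take_less[of p w j] p by auto
      have s2: "nth_occ w j ?s = p" using nth_occ_Suc_count_take[of p w j] p by auto
      have "pi_ij i j w ?s = r" unfolding pi_ij_def s2 using p by simp
      then have sA: "?s \<in> ?A" using s1 by simp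
      show "p \<in> nth_occ w j ` ?A" by (rule rev_image_eqI[of ?s ?A p "nth_occ w j", OF sA s2[symmetric]])
    qed
  qed
  moreover have "inj_on (nth_occ w j) ?A" using inj by (rule inj_on_subset) auto
  ultimately have "card ?B = card ?A" using card_image by fastforce
  then show ?thesis by (simp add: pi_star_def between_count_def)
qed

lemma between_count_snoc:
  "between_count i j (w @ [x]) r = between_count i j w r + (if x = j \<and> count_list w i = r then 1 else 0)"
proof -
  let ?B = "{p. p < length w \<and> w ! p = j \<and> count_list (take p w) i = r}"
  have e: "{p. p < length (w @ [x]) \<and> (w @ [x]) ! p = j \<and> count_list (take p (w @ [x])) i = r}
      = ?B \<union> (if x = j \<and> count_list w i = r then {length w} else {})"
    by (auto simp: nth_append less_Suc_eq)
  have f: "finite ?B" by (rule finite_subset[of _ "{..<length w}"]) auto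
  show ?thesis unfolding between_count_def e using f by (auto simp: card_insert_if)
qed

lemma between_count_Nil[simp]: "between_count i j [] r = 0"
  by (simp add: between_count_def)

lemma between_count_Cons:
  assumes "i \<noteq> j"
  shows "between_count i j (x # w) r = (if x = j \<and> r = 0 then 1 else 0) +
     (if x = i then (if r = 0 then 0 else between_count i j w (r - 1)) else between_count i j w r)"
proof -
  let ?B = "\<lambda>r. {p. p < length w \<and> w ! p = j \<and> count_list (take p w) i = r}"
  have e: "{p. p < length (x # w) \<and> (x # w) ! p = j \<and> count_list (take p (x # w)) i = r}
      = (if x = j \<and> r = 0 then {0} else {}) \<union>
        Suc ` (if x = i then (if r = 0 then {} else ?B (r - 1)) else ?B r)"
  proof (intro set_eqI iffI)
    fix p assume "p \<in> {p. p < length (x # w) \<and> (x # w) ! p = j \<and> count_list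
      (take p (x # w)) i = r}"
    then show "p \<in> (if x = j \<and> r = 0 then {0} else {}) \<union>
        Suc ` (if x = i then (if r = 0 then {} else ?B (r - 1)) else ?B r)"
      using assms by (cases p) (auto split: if_splits)
  next
    fix p assume "p \<in> (if x = j \<and> r = 0 then {0} else {}) \<union>
        Suc ` (if x = i then (if r = 0 then {} else ?B (r - 1)) else ?B r)"
    then show "p \<in> {p. p < length (x # w) \<and> (x # w) ! p = j \<and> count_list
      (take p (x # w)) i = r}"
      using assms by (auto split: if_splits)
  qed
  have f: "finite (?B r')" for r' by (rule finite_subset[of _ "{..<length w}"]) auto
  let ?C = "(if x = i then (if r = 0 then {} else ?B (r - 1)) else ?B r)"
  have fC: "finite ?C" using f by simp
  have "card ((if x = j \<and> r = 0 then {0} else {}) \<union> Suc ` ?C) =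
     card (if x = j \<and> r = 0 then {0::nat} else {}) + card (Suc ` ?C)"
    by (rule card_Un_disjoint) (use fC in auto)
  also have "card (Suc ` ?C) = card ?C" by (rule card_image) simp
  finally have fin: "card ((if x = j \<and> r = 0 then {0} else {}) \<union> Suc ` ?C) =
     card (if x = j \<and> r = 0 then {0::nat} else {}) + card ?C" .
  have c0: "card (if x = j \<and> r = 0 then {0::nat} else {}) =
    (if x = j \<and> r = 0 then 1 else 0)" by simp
  have cC: "card ?C = (if x = i then (if r = 0 then 0 else card (?B (r-1))) else card (?B r))" by simp
  show ?thesis unfolding between_count_def e fin c0 cC ..
qed

lemma between_count_beyond:
  assumes "count_list w i < r" shows "between_count i j w r = 0"
proof -
  have "\<not> (count_list (take p w) i = r)" for p using count_list_take_le[of p w i] assms by simp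
  then have "{p. p < length w \<and> w ! p = j \<and> count_list (take p w) i = r} = {}"
    by blast
  then show ?thesis by (simp add: between_count_def)
qed

lemma count_list_eq_card: "count_list W j = card {p. p < length W \<and> W ! p = j}"
proof -
  have "count_list W j = length (occ_positions W j)" by (simp add: length_occ_positions)
  also have "\<dots> = card (set (occ_positions W j))" by (simp add: distinct_card[OF distinct_occ_positions])
  finally show ?thesis by (simp add: set_occ_positions)
qed

section \<open>Merging a word with a two-letter pattern\<close>

definition erase_top :: "nat \<Rightarrow> nat list \<Rightarrow> nat list" where
  "erase_top d W = filter (\<lambda>x. x \<noteq> Suc d) W"

definition top_pair_word :: "nat \<Rightarrow> nat list \<Rightarrow> bool list" where
  "top_pair_word d W = map (\<lambda>x. x = d) (filter (\<lambda>x. x = d \<or> x = Suc d) W)"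

lemma count_erase_top: "count_list (erase_top d W) i = (if i = Suc d then 0 else count_list W i)"
  unfolding erase_top_def by (induction W) auto

lemma count_top_pair_word_True: "count_list (top_pair_word d W) True = count_list W d"
  unfolding top_pair_word_def by (induction W) auto

lemma count_top_pair_word_False: "count_list (top_pair_word d W) False = count_list W (Suc d)"
  unfolding top_pair_word_def by (induction W) auto

definition merges :: "nat \<Rightarrow> nat list \<Rightarrow> bool list \<Rightarrow> nat list set" where
  "merges d w P = {W. set W \<subseteq> {1..Suc d} \<and> erase_top d W = w \<and> top_pair_word d W = P}"

lemma merges_Nil: "merges d [] P = (if True \<in> set P then {} else {replicate (length P) (Suc d)})"
proof (cases "True \<in> set P")
  case True
  have "W \<notin> merges d [] P" for W
  proof
    assume W: "W \<in> merges d [] P"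
    then have "\<forall>x\<in>set W. x = Suc d"
      by (auto simp: merges_def erase_top_def top_pair_word_def filter_empty_conv)
    then have "filter (\<lambda>x. x = d \<or> x = Suc d) W = W" by (auto intro: filter_True)
    then have "map (\<lambda>x. x = d) W = P" using W
      by (simp add: merges_def erase_top_def top_pair_word_def)
    then have "True \<in> set (map (\<lambda>x. x = d) W)" using True by simp
    then obtain y where "y \<in> set W" "y = d" by auto
    then show False using \<open>\<forall>x\<in>set W. x = Suc d\<close> by auto
  qed
  then show ?thesis using True by auto
next
  case False
  have "merges d [] P = {replicate (length P) (Suc d)}"
  proof (intro set_eqI iffI)
    fix W assume W: "W \<in> merges d [] P"
    then have a: "\<forall>x\<in>set W. x = Suc d"
      by (auto simp: merges_def erase_top_def top_pair_word_def filter_empty_conv)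
    then have "filter (\<lambda>x. x = d \<or> x = Suc d) W = W" by (auto intro: filter_True)
    then have "map (\<lambda>x. x = d) W = P" using W
      by (simp add: merges_def erase_top_def top_pair_word_def)
    then have "length W = length P" by auto
    then show "W \<in> {replicate (length P) (Suc d)}" using a replicate_length_same[OF a] by auto
  next
    fix W assume "W \<in> {replicate (length P) (Suc d)}"
    have "\<forall>y\<in>set P. y = False" using False by auto
    then have P: "replicate (length P) False = P" by (rule replicate_length_same)
    then show "W \<in> merges d [] P" using \<open>W \<in> _\<close>
      by (auto simp: merges_def erase_top_def top_pair_word_def filter_empty_conv)
  qed
  then show ?thesis using False by simp
qed

lemma merges_pattern_Nil:
  assumes "set w \<subseteq> {1..d}"
  shows "merges d w [] = (if d \<in> set w then {} else {w})"
proof (intro set_eqI iffI)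
  fix W assume W: "W \<in> merges d w []"
  then have a: "\<forall>x\<in>set W. x \<noteq> d \<and> x \<noteq> Suc d"
    by (auto simp: merges_def erase_top_def top_pair_word_def filter_empty_conv)
  then have "filter (\<lambda>x. x \<noteq> Suc d) W = W" by (auto intro: filter_True)
  then have "W = w" using W by (simp add: merges_def erase_top_def top_pair_word_def)
  then show "W \<in> (if d \<in> set w then {} else {w})" using a by auto
next
  fix W assume "W \<in> (if d \<in> set w then {} else {w})"
  then show "W \<in> merges d w []" using assms
    by (auto simp: merges_def erase_top_def top_pair_word_def filter_empty_conv split: if_splits
      intro!: filter_True)
qed

lemma merges_Cons_True:
  assumes "x \<in> {1..d}"
  shows "merges d (x # w) (True # P) = (Cons x) ` (if x = d then merges d w P else merges d w (True # P))"
proof (intro set_eqI iffI)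
  fix W assume W: "W \<in> merges d (x # w) (True # P)"
  show "W \<in> (Cons x) ` (if x = d then merges d w P else merges d w (True # P))"
  proof (cases W)
    case Nil then show ?thesis using W by (simp add: merges_def erase_top_def top_pair_word_def)
  next
    case (Cons y W')
    then show ?thesis using W assms
      by (auto simp: merges_def erase_top_def top_pair_word_def subset_iff split: if_splits)
  qed
next
  fix W assume "W \<in> (Cons x) ` (if x = d then merges d w P else merges d w (True # P))"
  then show "W \<in> merges d (x # w) (True # P)" using assms
    by (auto simp: merges_def erase_top_def top_pair_word_def subset_iff split: if_splits)
qed

lemma merges_Cons_False:
  assumes "x \<in> {1..d}"
  shows "merges d (x # w) (False # P) = (Cons (Suc d)) ` merges d (x # w) P \<union>
     (if x = d then {} else (Cons x) ` merges d w (False # P))"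
proof (intro set_eqI iffI)
  fix W assume W: "W \<in> merges d (x # w) (False # P)"
  show "W \<in> (Cons (Suc d)) ` merges d (x # w) P \<union>
    (if x = d then {} else (Cons x) ` merges d w (False # P))"
  proof (cases W)
    case Nil then show ?thesis using W by (simp add: merges_def erase_top_def top_pair_word_def)
  next
    case (Cons y W')
    then show ?thesis using W assms
      by (auto simp: merges_def erase_top_def top_pair_word_def subset_iff split: if_splits)
  qed
next
  fix W assume "W \<in> (Cons (Suc d)) ` merges d (x # w) P \<union>
    (if x = d then {} else (Cons x) ` merges d w (False # P))"
  then show "W \<in> merges d (x # w) (False # P)" using assms
    by (auto simp: merges_def erase_top_def top_pair_word_def subset_iff split: if_splits)
qed

fun merge_count :: "nat \<Rightarrow> nat list \<Rightarrow> bool list \<Rightarrow> nat" where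
  "merge_count d [] P = (if True \<in> set P then 0 else 1)"
| "merge_count d (x # w) [] = (if d \<in> set (x # w) then 0 else 1)"
| "merge_count d (x # w) (True # P) =
     (if x = d then merge_count d w P else merge_count d w (True # P))"
| "merge_count d (x # w) (False # P) =
     (if x = d then merge_count d (x # w) P
      else merge_count d w (False # P) + merge_count d (x # w) P)"

lemma card_merges:
  "set w \<subseteq> {1..d} \<Longrightarrow> finite (merges d w P) \<and> card (merges d w P) =
    merge_count d w P"
proof (induction d w P rule: merge_count.induct)
  case (1 d P) then show ?case by (simp add: merges_Nil)
next
  case (2 d x w) then show ?case by (simp add: merges_pattern_Nil[OF "2.prems"] del: merges_Nil)
next
  case (3 d x w P)
  then show ?case by (cases "x = d") (simp_all add: merges_Cons_True card_image)
next
  case (4 d x w P)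
  then have x: "x \<in> {1..d}" and "Suc d \<noteq> x" by auto
  then have "Cons (Suc d) ` merges d (x # w) P \<inter> Cons x ` merges d w (False # P) = {}" by auto
  with 4 x show ?case
    by (cases "x = d") (simp_all add: merges_Cons_False card_image card_Un_disjoint)
qed

definition lower_between_sum :: "nat \<Rightarrow> nat list \<Rightarrow> nat \<Rightarrow> nat" where
  "lower_between_sum d w r = (\<Sum>l=1..d-1. between_count d l w r)"

lemma lower_between_sum_Nil[simp]: "lower_between_sum d [] r = 0"
  by (simp add: lower_between_sum_def)

lemma lower_between_sum_Cons:
  assumes "x \<in> {1..d}"
  shows "lower_between_sum d (x # w) r = (if x \<noteq> d \<and> r = 0 then 1 else 0) +
     (if x = d then (if r = 0 then 0 else lower_between_sum d w (r - 1)) else lower_between_sum d w r)"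
proof (cases "x = d")
  case True
  have "between_count d l (x # w) r = (if r = 0 then 0 else between_count d l w (r - 1))" if "l
    \<in> {1..d-1}" for l
    using between_count_Cons[of d l x w r] that True by auto
  then have "lower_between_sum d (x # w) r =
    (\<Sum>l=1..d-1. (if r = 0 then 0 else between_count d l w (r - 1)))"
    unfolding lower_between_sum_def by (rule sum.cong[OF refl])
  then show ?thesis using True by (auto simp: lower_between_sum_def)
next
  case False
  have "between_count d l (x # w) r = (if x = l \<and> r = 0 then 1 else 0) + between_count d l w
    r" if "l \<in> {1..d-1}" for l
    using between_count_Cons[of d l x w r] that False by auto
  then have "lower_between_sum d (x # w) r =
    (\<Sum>l=1..d-1. (if x = l \<and> r = 0 then 1 else 0) + between_count d l w r)"
    unfolding lower_between_sum_def by (rule sum.cong[OF refl])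
  also have "\<dots> = (\<Sum>l=1..d-1. (if x = l \<and> r = 0 then 1 else 0)) + lower_between_sum d w r"
    by (simp add: sum.distrib lower_between_sum_def)
  also have "(\<Sum>l=1..d-1. (if x = l \<and> r = 0 then 1 else 0)) = (if r = 0 then 1 else (0::nat))"
  proof -
    have "(\<Sum>l=1..d-1. (if x = l \<and> r = 0 then 1 else 0)) =
      (\<Sum>l\<in>{1..d-1}. (if x = l then (if r = 0 then 1 else 0) else (0::nat)))"
      by (rule sum.cong) auto
    also have "\<dots> = (if r = 0 then 1 else 0)" using assms False by (subst sum.delta') auto
    finally show ?thesis .
  qed
  finally show ?thesis using False by simp
qed

abbreviation pattern_gap :: "bool list \<Rightarrow> nat \<Rightarrow> nat" where
  "pattern_gap P r \<equiv> between_count True False P r"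

lemma pattern_gap_Cons: "pattern_gap (c # P) r = (if c = False \<and> r = 0 then 1 else 0) +
   (if c then (if r = 0 then 0 else pattern_gap P (r - 1)) else pattern_gap P r)"
  using between_count_Cons[of True False c P r] by simp

definition binom_weight :: "nat \<Rightarrow> nat list \<Rightarrow> bool list \<Rightarrow> nat" where
  "binom_weight d w P =
     (\<Prod>r=0..count_list w d. (pattern_gap P r + lower_between_sum d w r) choose pattern_gap P r)"

lemma binom_weight_lessThan:
  "binom_weight d w P =
     (\<Prod>r<Suc (count_list w d). (pattern_gap P r + lower_between_sum d w r) choose pattern_gap P r)"
  unfolding binom_weight_def by (rule prod.cong) auto

lemma binom_weight_Cons_True:
  assumes x: "x \<in> {1..d}"
  shows "binom_weight d (x # w) (True # P) =
     (if x = d then binom_weight d w P else binom_weight d w (True # P))"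
proof (cases "x = d")
  case True
  have "binom_weight d (x # w) (True # P) = (\<Prod>r<Suc (Suc (count_list w d)).
      (pattern_gap (True # P) r + lower_between_sum d (x # w) r) choose pattern_gap (True # P) r)"
    unfolding binom_weight_lessThan using True by simp
  also have "\<dots> = binom_weight d w P"
    unfolding prod.lessThan_Suc_shift binom_weight_lessThan
    using True x by (simp add: pattern_gap_Cons lower_between_sum_Cons)
  finally show ?thesis using True by simp
next
  case False
  then show ?thesis
    unfolding binom_weight_lessThan using x
    by (auto intro!: prod.cong simp: pattern_gap_Cons lower_between_sum_Cons)
qed

text \<open>The case of a letter below d against a letter b of the pattern is Pascal's rule for the
  factor r = 0, all other factors being unaffected.\<close>

lemma binom_weight_Cons_False:
  assumes x: "x \<in> {1..d}"
  shows "binom_weight d (x # w) (False # P) =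
     (if x = d then binom_weight d (x # w) P
      else binom_weight d w (False # P) + binom_weight d (x # w) P)"
proof (cases "x = d")
  case True
  then show ?thesis
    unfolding binom_weight_lessThan using x
    by (auto intro!: prod.cong simp: pattern_gap_Cons lower_between_sum_Cons)
next
  case False
  let ?c = "count_list w d" and ?b = "pattern_gap P 0" and ?a = "lower_between_sum d w 0"
  let ?G = "\<Prod>r<?c. (pattern_gap P (Suc r) + lower_between_sum d w (Suc r)) choose pattern_gap P (Suc r)"
  have c: "count_list (x # w) d = ?c" using False by simp
  have e0: "binom_weight d (x # w) (False # P) = ((?b + 1) + (?a + 1) choose (?b + 1)) * ?G"
    unfolding binom_weight_lessThan c prod.lessThan_Suc_shift using False x
    by (simp add: pattern_gap_Cons lower_between_sum_Cons)
  have e1: "binom_weight d w (False # P) = ((?b + 1) + ?a choose (?b + 1)) * ?G"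
    unfolding binom_weight_lessThan prod.lessThan_Suc_shift by (simp add: pattern_gap_Cons)
  have e2: "binom_weight d (x # w) P = (?b + (?a + 1) choose ?b) * ?G"
    unfolding binom_weight_lessThan c prod.lessThan_Suc_shift using False x
    by (simp add: lower_between_sum_Cons)
  have "(?b + 1) + (?a + 1) choose (?b + 1) = ((?b + 1) + ?a choose (?b + 1)) + (?b + (?a + 1) choose ?b)"
    by (simp add: add_ac)
  then show ?thesis using False e0 e1 e2 by (simp add: distrib_right)
qed

lemma merge_count_eq_binom_weight:
  "set w \<subseteq> {1..d} \<Longrightarrow> count_list w d = count_list P True
    \<Longrightarrow> merge_count d w P = binom_weight d w P"
proof (induction d w P rule: merge_count.induct)
  case (1 d P)
  then show ?case by (simp add: binom_weight_def count_list_0_iff)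
next
  case (2 d x w)
  then show ?case by (simp add: binom_weight_def between_count_def count_list_0_iff split: if_splits)
next
  case (3 d x w P)
  then show ?case by (cases "x = d") (simp_all add: binom_weight_Cons_True)
next
  case (4 d x w P)
  then show ?case by (cases "x = d") (simp_all add: binom_weight_Cons_False)
qed

section \<open>Chains of consecutive letters\<close>

definition letter_chains :: "nat \<Rightarrow> nat list \<Rightarrow> (nat \<Rightarrow> nat) set" where
  "letter_chains j W = {p \<in> {1..j} \<rightarrow>\<^sub>E {..<length W}.
    (\<forall>i\<in>{1..j}. W ! (p i) = i) \<and> (\<forall>i\<in>{1..<j}. p i < p (Suc i))}"

definition chain_count :: "nat \<Rightarrow> nat list \<Rightarrow> nat" where
  "chain_count j W = card (letter_chains j W)"

lemma finite_letter_chains: "finite (letter_chains j W)"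
  by (rule finite_subset[of _ "{1..j} \<rightarrow>\<^sub>E {..<length W}"]) (auto simp:
    letter_chains_def intro: finite_PiE)

lemma letter_chains_strict_mono:
  assumes "p \<in> letter_chains j W" "1 \<le> i" "i < i'" "i' \<le> j"
  shows "p i < p i'"
  using assms(3,4)
proof (induction i' rule: less_induct)
  case (less i')
  obtain i'' where i'': "i' = Suc i''" using less.prems by (cases i') auto
  have step: "p i'' < p i'" using assms(1,2) less.prems i'' unfolding letter_chains_def by auto
  show ?case
  proof (cases "i = i''")
    case True then show ?thesis using step by simp
  next
    case False
    then have "p i < p i''" using less.IH[of i''] less.prems i'' by auto
    then show ?thesis using step by simp
  qed
qed

lemma letter_chains_0: "letter_chains 0 W = {\<lambda>_. undefined}"
  by (auto simp: letter_chains_def PiE_def extensional_def)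

lemma chain_count_0: "chain_count 0 W = 1" by (simp add: chain_count_def letter_chains_0)

lemma letter_chains_snoc_old:
  assumes q: "q \<in> letter_chains j (W @ [x])" and j: "1 \<le> j" and qj: "q j < length W"
  shows "q \<in> letter_chains j W"
proof -
  have lt: "q i < length W" if "i \<in> {1..j}" for i
    using letter_chains_strict_mono[OF q, of i j] that qj by (cases "i = j") auto
  show ?thesis
    unfolding letter_chains_def
  proof (intro CollectI conjI ballI)
    show "q \<in> {1..j} \<rightarrow>\<^sub>E {..<length W}" using q lt
      unfolding letter_chains_def by (auto simp: PiE_def Pi_def)
  next
    fix i assume i: "i \<in> {1..j}"
    then have "(W @ [x]) ! q i = i" using q unfolding letter_chains_def by auto
    then show "W ! q i = i" using lt[OF i] by (simp add: nth_append)
  next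
    fix i assume "i \<in> {1..<j}"
    then show "q i < q (Suc i)" using q unfolding letter_chains_def by auto
  qed
qed

lemma letter_chains_snoc_new:
  assumes q: "q \<in> letter_chains j (W @ [x])" and j: "1 \<le> j" and qj: "q j = length W"
  shows "x = j" and "q(j := undefined) \<in> letter_chains (j - 1) W"
proof -
  have "(W @ [x]) ! (q j) = j" using q j unfolding letter_chains_def by auto
  then show "x = j" using qj by simp
  have lt: "q i < length W" if "i \<in> {1..j-1}" for i
    using letter_chains_strict_mono[OF q, of i j] that qj by auto
  show "q(j := undefined) \<in> letter_chains (j - 1) W"
    unfolding letter_chains_def
  proof (intro CollectI conjI ballI)
    show "q(j := undefined) \<in> {1..j-1} \<rightarrow>\<^sub>E {..<length W}"
      using q lt unfolding letter_chains_def
      by (auto simp: PiE_def Pi_def extensional_def)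
  next
    fix i assume i: "i \<in> {1..j-1}"
    then have "(W @ [x]) ! q i = i" "i \<noteq> j" using q j unfolding letter_chains_def by auto
    then show "W ! (q(j := undefined)) i = i" using lt[OF i] by (simp add: nth_append)
  next
    fix i assume "i \<in> {1..<j-1}"
    then show "(q(j := undefined)) i < (q(j := undefined)) (Suc i)" using q
      unfolding letter_chains_def by auto
  qed
qed

lemma letter_chains_snoc_extend:
  assumes p: "p \<in> letter_chains (j - 1) W" and j: "1 \<le> j"
  shows "p(j := length W) \<in> letter_chains j (W @ [j])"
  unfolding letter_chains_def
proof (intro CollectI conjI ballI)
  show "p(j := length W) \<in> {1..j} \<rightarrow>\<^sub>E {..<length (W @ [j])}"
    using p j unfolding letter_chains_def by (auto simp: PiE_def Pi_def extensional_def)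
next
  fix i assume "i \<in> {1..j}"
  then show "(W @ [j]) ! (p(j := length W)) i = i"
    using p unfolding letter_chains_def by (cases "i = j") (auto simp: nth_append PiE_def Pi_def)
next
  fix i assume i: "i \<in> {1..<j}"
  then show "(p(j := length W)) i < (p(j := length W)) (Suc i)"
    using p unfolding letter_chains_def by (cases "Suc i = j") (auto simp: PiE_def Pi_def)
qed

lemma letter_chains_snoc:
  assumes j: "1 \<le> j"
  shows "letter_chains j (W @ [x]) =
     letter_chains j W \<union> (if x = j then (\<lambda>p. p(j := length W)) ` letter_chains
       (j - 1) W else {})"
proof (intro set_eqI iffI)
  fix q assume q: "q \<in> letter_chains j (W @ [x])"
  have "q j < Suc (length W)" using q j unfolding letter_chains_def by auto
  then consider "q j < length W" | "q j = length W" by linarith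
  then show "q \<in> letter_chains j W \<union> (if x = j then (\<lambda>p. p(j := length W)) `
    letter_chains (j - 1) W else {})"
  proof cases
    case 1 then show ?thesis using letter_chains_snoc_old[OF q j] by simp
  next
    case 2
    have "q \<in> (\<lambda>p. p(j := length W)) ` letter_chains (j - 1) W"
      by (rule rev_image_eqI[OF letter_chains_snoc_new(2)[OF q j 2]]) (simp add: 2 fun_eq_iff)
    then show ?thesis using letter_chains_snoc_new(1)[OF q j 2] by simp
  qed
next
  fix q assume "q \<in> letter_chains j W \<union>
    (if x = j then (\<lambda>p. p(j := length W)) ` letter_chains (j - 1) W else {})"
  then show "q \<in> letter_chains j (W @ [x])"
    using letter_chains_snoc_extend[OF _ j] unfolding letter_chains_def
    by (auto simp: PiE_def Pi_def nth_append split: if_splits)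
qed

lemma chain_count_snoc:
  assumes "1 \<le> j"
  shows "chain_count j (W @ [x]) = chain_count j W + (if x = j then chain_count (j - 1) W else 0)"
proof -
  have inj: "inj_on (\<lambda>p. p(j := length W)) (letter_chains (j - 1) W)"
  proof
    fix p p' assume p: "p \<in> letter_chains (j - 1) W" and p': "p' \<in> letter_chains (j - 1) W"
      and e: "p(j := length W) = p'(j := length W)"
    have "p j = undefined" "p' j = undefined"
      using p p' assms unfolding letter_chains_def by (auto simp: PiE_def extensional_def)
    then show "p = p'" using e by (metis fun_upd_triv fun_upd_upd)
  qed
  have disj: "letter_chains j W \<inter> (\<lambda>p. p(j := length W)) ` letter_chains (j - 1) W = {}"
    using assms unfolding letter_chains_def by (auto simp: PiE_def Pi_def)
  show ?thesis
  proof (cases "x = j")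
    case True
    have "chain_count j (W @ [x]) = card (letter_chains j W) + card
      ((\<lambda>p. p(j := length W)) ` letter_chains (j - 1) W)"
      unfolding chain_count_def letter_chains_snoc[OF assms] using True disj
      by (simp add: card_Un_disjoint finite_letter_chains)
    then show ?thesis using True inj by (simp add: card_image chain_count_def)
  next
    case False then show ?thesis unfolding chain_count_def letter_chains_snoc[OF assms] by simp
  qed
qed

lemma chain_count_Nil: "1 \<le> j \<Longrightarrow> chain_count j [] = 0"
  by (auto simp: chain_count_def letter_chains_def PiE_def Pi_def)

lemma chain_count_erase_top:
  "j \<le> d \<Longrightarrow> chain_count j (erase_top d W) = chain_count j W"
  unfolding erase_top_def
proof (induction W arbitrary: j rule: rev_induct)
  case Nil then show ?case by simp
next
  case (snoc x W)
  show ?case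
  proof (cases "j = 0")
    case True then show ?thesis by (simp add: chain_count_0)
  next
    case False
    then have j: "1 \<le> j" by simp
    show ?thesis
    proof (cases "x = Suc d")
      case True then show ?thesis using snoc j by (simp add: chain_count_snoc)
    next
      case False
      have "chain_count j (filter (\<lambda>x. x \<noteq> Suc d) (W @ [x])) = chain_count j
        (filter (\<lambda>x. x \<noteq> Suc d) W @ [x])"
        using False by simp
      also have "\<dots> = chain_count j W + (if x = j then chain_count (j - 1) W else 0)"
        using snoc j by (simp add: chain_count_snoc)
      also have "\<dots> = chain_count j (W @ [x])" using j by (simp add: chain_count_snoc)
      finally show ?thesis .
    qed
  qed
qed

lemma S_count_eq_card_chains: "S_count d w t = card
  {p \<in> letter_chains d w. 1 \<le> t \<and> p d \<le> nth_occ w d t}"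
  unfolding S_count_def letter_chains_def by (rule arg_cong[where f=card]) auto

lemma S_count_0: "S_count d w 0 = 0"
  unfolding S_count_eq_card_chains by simp

lemma S_count_snoc:
  assumes d: "1 \<le> d" and t: "1 \<le> t" "t \<le> count_list w d"
  shows "S_count d (w @ [x]) t = S_count d w t"
proof -
  have tl: "t - 1 < length (occ_positions w d)" using t by (simp add: length_occ_positions)
  have n: "nth_occ (w @ [x]) d t = nth_occ w d t"
    unfolding nth_occ_eq_occ_positions occ_positions_snoc using tl by (simp add: nth_append)
  have lt: "nth_occ w d t < length w" using nth_occ_spec(1)[OF t] .
  have "{p \<in> letter_chains d (w @ [x]). 1 \<le> t \<and> p d \<le> nth_occ w d t} = {p \<in>
    letter_chains d w. 1 \<le> t \<and> p d \<le> nth_occ w d t}"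
    unfolding letter_chains_snoc[OF d] using lt by auto
  then show ?thesis unfolding S_count_eq_card_chains n by simp
qed

lemma S_count_all:
  assumes d: "1 \<le> d"
  shows "S_count d w (count_list w d) = chain_count d w"
proof (cases "count_list w d = 0")
  case True
  have "letter_chains d w = {}"
  proof (rule ccontr)
    assume "letter_chains d w \<noteq> {}"
    then obtain p where p: "p \<in> letter_chains d w" by blast
    then have "p d < length w" "w ! p d = d" using d unfolding letter_chains_def
      by (auto simp: PiE_def Pi_def)
    then have "d \<in> set w" by (metis nth_mem)
    then show False using True by (simp add: count_list_0_iff)
  qed
  then show ?thesis using True by (simp add: S_count_0 chain_count_def)
next
  case False
  have "{p \<in> letter_chains d w. 1 \<le> count_list w d \<and> p d \<le> nth_occ w d
    (count_list w d)} = letter_chains d w"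
  proof (intro set_eqI iffI)
    fix p assume p: "p \<in> letter_chains d w"
    then have pl: "p d < length w" and pw: "w ! p d = d" using d unfolding letter_chains_def
      by (auto simp: PiE_def Pi_def)
    have "p d \<le> nth_occ w d (count_list w d)"
      using le_nth_occ_iff[of "count_list w d" w d "p d"] False pl pw count_list_take_less[OF pl pw] by simp
    then show "p \<in> {p \<in> letter_chains d w. 1 \<le> count_list w d \<and> p d \<le> nth_occ
      w d (count_list w d)}"
      using p False by simp
  qed simp
  then show ?thesis unfolding S_count_eq_card_chains chain_count_def by simp
qed

lemma sum_S_count_snoc:
  assumes d: "1 \<le> d"
  shows "(\<Sum>r=0..count_list w d. S_count d (w @ [x]) r * f r) =
    (\<Sum>r=0..count_list w d. S_count d w r * f r)"
proof (intro sum.cong refl)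
  fix r assume "r \<in> {0..count_list w d}"
  then show "S_count d (w @ [x]) r * f r = S_count d w r * f r"
    using S_count_snoc[OF d, of r w x] by (cases "r = 0") (auto simp: S_count_0)
qed

text \<open>A chain 1 < ... < d+1 in W ends at an occurrence of d+1; the part before it is a chain
  1 < ... < d in the restriction w of W to the letters 1..d ending at or before the r-th d,
  where r is the number of d's before that occurrence of d+1.\<close>

lemma chain_count_decomp:
  assumes d: "1 \<le> d"
  shows "set W \<subseteq> {1..Suc d} \<Longrightarrow>
    chain_count (Suc d) W =
      (\<Sum>r=0..count_list W d. S_count d (erase_top d W) r * pattern_gap (top_pair_word d W) r)"
proof (induction W rule: rev_induct)
  case Nil then show ?case by (simp add: chain_count_Nil S_count_0 erase_top_def)
next
  case (snoc x W)
  let ?c = "count_list W d" and ?w = "erase_top d W" and ?P = "top_pair_word d W"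
  have IH: "chain_count (Suc d) W = (\<Sum>r=0..?c. S_count d ?w r * pattern_gap ?P r)"
    using snoc by simp
  have cw: "count_list ?w d = ?c" by (simp add: count_erase_top)
  have cP: "count_list ?P True = ?c" by (simp add: count_top_pair_word_True)
  consider "x = Suc d" | "x = d" | "x \<noteq> d" "x \<noteq> Suc d" by blast
  then show ?case
  proof cases
    case 1
    have "chain_count d W = S_count d ?w ?c"
      using chain_count_erase_top[of d d W] S_count_all[OF d, of ?w] cw by simp
    moreover have "(\<Sum>r=0..?c. S_count d ?w r * pattern_gap (?P @ [False]) r) =
        (\<Sum>r=0..?c. S_count d ?w r * pattern_gap ?P r) + S_count d ?w ?c"
    proof -
      have "(\<Sum>r=0..?c. S_count d ?w r * pattern_gap (?P @ [False]) r) =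
          (\<Sum>r=0..?c. S_count d ?w r * pattern_gap ?P r + (if r = ?c then S_count d ?w r else 0))"
        by (intro sum.cong) (auto simp: between_count_snoc cP)
      then show ?thesis by (simp add: sum.distrib)
    qed
    ultimately show ?thesis using IH 1
      by (simp add: chain_count_snoc erase_top_def top_pair_word_def)
  next
    case 2
    have "pattern_gap (?P @ [True]) (Suc ?c) = 0"
      using between_count_beyond[of ?P True "Suc ?c" False] cP by (simp add: between_count_snoc)
    moreover have "pattern_gap (?P @ [True]) r = pattern_gap ?P r" for r
      by (simp add: between_count_snoc)
    ultimately show ?thesis
      using IH 2 sum_S_count_snoc[OF d, of ?w d "pattern_gap ?P"] cw
      by (simp add: chain_count_snoc erase_top_def top_pair_word_def)
  next
    case 3
    then show ?thesis
      using IH sum_S_count_snoc[OF d, of ?w x "pattern_gap ?P"] cw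
      by (simp add: chain_count_snoc erase_top_def top_pair_word_def)
  qed
qed

section \<open>Counting words by their number of chains\<close>

definition letter_mset :: "nat \<Rightarrow> (nat \<Rightarrow> nat) \<Rightarrow> nat multiset" where
  "letter_mset d m = (\<Sum>i\<in>{1..d}. replicate_mset (m i) i)"

lemma count_letter_mset: "count (letter_mset d m) x = (if x \<in> {1..d} then m x else 0)"
proof -
  have "count (letter_mset d m) x = (\<Sum>i\<in>{1..d}. count (replicate_mset (m i) i) x)"
    unfolding letter_mset_def by (simp add: count_sum)
  also have "\<dots> = (\<Sum>i\<in>{1..d}. if i = x then m i else 0)"
    by (rule sum.cong) auto
  also have "\<dots> = (if x \<in> {1..d} then m x else 0)" by (simp add: sum.delta')
  finally show ?thesis .
qed

lemma words_eq_permutations: "words d m = permutations_of_multiset (letter_mset d m)"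
proof (intro set_eqI iffI)
  fix w assume w: "w \<in> words d m"
  have "count (mset w) x = count (letter_mset d m) x" for x
  proof (cases "x \<in> {1..d}")
    case True then show ?thesis using w by (simp add: words_def count_letter_mset count_mset)
  next
    case False
    then have "x \<notin> set w" using w by (auto simp: words_def)
    then show ?thesis using False by (auto simp: count_letter_mset count_mset count_list_0_iff)
  qed
  then show "w \<in> permutations_of_multiset (letter_mset d m)"
    by (simp add: permutations_of_multiset_def multiset_eq_iff)
next
  fix w assume "w \<in> permutations_of_multiset (letter_mset d m)"
  then have c: "count_list w x = (if x \<in> {1..d} then m x else 0)" for x
    by (simp add: permutations_of_multiset_def count_mset[symmetric] count_letter_mset)
  have "set w \<subseteq> {1..d}"
  proof
    fix x assume "x \<in> set w"
    then have "count_list w x \<noteq> 0" by (simp add: count_list_0_iff)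
    then show "x \<in> {1..d}" using c[of x] by (auto split: if_splits)
  qed
  then show "w \<in> words d m" using c by (simp add: words_def)
qed

lemma finite_words: "finite (words d m)"
  by (simp add: words_eq_permutations finite_permutations_of_multiset)

lemma length_bool_list: "length P = count_list P True + count_list P False"
  by (induction P) auto

lemma finite_words_ab: "finite (words_ab a b)"
proof (rule finite_subset)
  show "words_ab a b \<subseteq> {P. set P \<subseteq> UNIV \<and> length P = a + b}"
    using length_bool_list by (auto simp: words_ab_def)
  show "finite {P :: bool list. set P \<subseteq> UNIV \<and> length P = a + b}"
    by (rule finite_lists_length_eq) simp
qed

lemma card_words_multinom: "real (card (words K m)) = multinom (map m [1..<Suc K])"
proof -
  let ?A = "letter_mset K m"
  have sz: "size ?A = (\<Sum>i\<in>{1..K}. m i)" unfolding letter_mset_def by (simp add: size_multiset_sum)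
  have sm: "set_mset ?A = {i\<in>{1..K}. m i \<noteq> 0}"
    by (auto simp: count_letter_mset set_mset_def split: if_splits)
  have pr: "(\<Prod>x\<in>set_mset ?A. fact (count ?A x)) = (\<Prod>i\<in>{1..K}. fact (m i) :: nat)"
  proof -
    have "(\<Prod>x\<in>set_mset ?A. fact (count ?A x)) =
      (\<Prod>x\<in>{i\<in>{1..K}. m i \<noteq> 0}. fact (m x) :: nat)"
      unfolding sm by (rule prod.cong) (auto simp: count_letter_mset)
    also have "\<dots> = (\<Prod>i\<in>{1..K}. fact (m i))"
      by (rule prod.mono_neutral_left) auto
    finally show ?thesis .
  qed
  have "card (words K m) = fact (size ?A) div (\<Prod>x\<in>set_mset ?A. fact (count ?A x))"
    unfolding words_eq_permutations by (rule card_permutations_of_multiset(1))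
  moreover have "(\<Prod>x\<in>set_mset ?A. fact (count ?A x) :: nat) dvd fact (size ?A)"
    by (rule card_permutations_of_multiset(2))
  ultimately have "real (card (words K m)) = real (fact (size ?A)) / real
    (\<Prod>x\<in>set_mset ?A. fact (count ?A x))"
    by (simp add: real_of_nat_div)
  also have "\<dots> = fact (\<Sum>i\<in>{1..K}. m i) / (\<Prod>i\<in>{1..K}. fact (m i))"
    unfolding sz pr by (simp add: of_nat_prod)
  also have "\<dots> = multinom (map m [1..<Suc K])"
  proof -
    have s: "sum_list (map m [1..<Suc K]) = (\<Sum>i\<in>{1..K}. m i)"
      by (simp only: interv_sum_list_conv_sum_set_nat set_upt atLeastLessThanSuc_atLeastAtMost)
    have p: "(\<Prod>x\<leftarrow>map m [1..<Suc K]. fact x) = (\<Prod>i\<in>{1..K}. fact (m i) :: real)"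
    proof -
      have "(\<Prod>i\<in>{1..K}. fact (m i) :: real) = (\<Prod>i\<in>set [1..<Suc K]. fact (m i))"
        by (simp only: set_upt atLeastLessThanSuc_atLeastAtMost)
      also have "\<dots> = prod_list (map (\<lambda>i. fact (m i)) [1..<Suc K])"
        by (rule prod.distinct_set_conv_list) simp
      finally show ?thesis by (simp add: comp_def)
    qed
    show ?thesis unfolding multinom_def s p ..
  qed
  finally show ?thesis .
qed

lemma merges_disjoint: "(w, P) \<noteq> (w', P') \<Longrightarrow> merges d w P \<inter> merges d w' P' = {}"
  by (auto simp: merges_def)

lemma binom_weight_eq_card_merges:
  assumes d: "1 \<le> d" and w: "w \<in> words d m" and P: "P \<in> words_ab (m d) (m (Suc d))"
  shows "(\<Prod>r=0..m d. real ((pi_star True False P r + (\<Sum>l=1..d-1. pi_star d l w r))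
                           choose (pi_star True False P r)))
       = real (card (merges d w P))"
proof -
  have sw: "set w \<subseteq> {1..d}" using w by (simp add: words_def)
  have cw: "count_list w d = m d" using w d by (simp add: words_def)
  have cP: "count_list P True = m d" using P by (simp add: words_ab_def)
  have "(\<Prod>r=0..m d. real ((pi_star True False P r + (\<Sum>l=1..d-1. pi_star d l w r))
                           choose (pi_star True False P r))) = real (binom_weight d w P)"
    unfolding binom_weight_def cw
    by (simp add: of_nat_prod pi_star_eq_between_count lower_between_sum_def)
  also have "binom_weight d w P = card (merges d w P)"
    using merge_count_eq_binom_weight[OF sw] card_merges[OF sw] cw cP by simp
  finally show ?thesis .
qed

lemma words_chain_count_eq_Union_merges:
  assumes d: "1 \<le> d"
  shows "{W \<in> words (Suc d) m. chain_count (Suc d) W = n} =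
     (\<Union>w\<in>words d m. \<Union>P\<in>{P \<in> words_ab (m d) (m (Suc d)).
        (\<Sum>r=0..m d. S_count d w r * pi_star True False P r) = n}. merges d w P)"
    (is "?L = (\<Union>w\<in>words d m. \<Union>P\<in>?Pn w. merges d w P)")
proof (intro set_eqI iffI)
  fix W assume W: "W \<in> ?L"
  have sW: "set W \<subseteq> {1..Suc d}" and cnts: "\<And>i. i \<in> {1..Suc d}
    \<Longrightarrow> count_list W i = m i"
    using W by (simp_all add: words_def)
  have cd: "count_list W d = m d" using cnts[of d] d by simp
  have "set (erase_top d W) \<subseteq> {1..d}" using sW by (auto simp: erase_top_def)
  then have wm: "erase_top d W \<in> words d m"
    using cnts by (auto simp: words_def count_erase_top)
  have Pm: "top_pair_word d W \<in> words_ab (m d) (m (Suc d))"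
    using cnts[of d] cnts[of "Suc d"] d
    by (simp add: words_ab_def count_top_pair_word_True count_top_pair_word_False)
  have "(\<Sum>r=0..m d. S_count d (erase_top d W) r * pi_star True False (top_pair_word d W) r) = n"
    using chain_count_decomp[OF d sW] cd W by (simp add: pi_star_eq_between_count)
  then have "top_pair_word d W \<in> ?Pn (erase_top d W)" using Pm by simp
  moreover have "W \<in> merges d (erase_top d W) (top_pair_word d W)" using sW by (simp add: merges_def)
  ultimately show "W \<in> (\<Union>w\<in>words d m. \<Union>P\<in>?Pn w. merges d w P)" using wm by blast
next
  fix W assume "W \<in> (\<Union>w\<in>words d m. \<Union>P\<in>?Pn w. merges d w P)"
  then obtain w P where w: "w \<in> words d m" and P: "P \<in> ?Pn w" and W: "W \<in> merges d w P" by blast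
  have sW: "set W \<subseteq> {1..Suc d}" and e: "erase_top d W = w" "top_pair_word d W = P"
    using W by (simp_all add: merges_def)
  have cnts: "count_list W i = m i" if "i \<in> {1..Suc d}" for i
  proof (cases "i = Suc d")
    case True
    then show ?thesis using count_top_pair_word_False[of d W] e P by (simp add: words_ab_def)
  next
    case False
    then show ?thesis using that count_erase_top[of d W i] e w by (simp add: words_def)
  qed
  have "chain_count (Suc d) W = n"
    using chain_count_decomp[OF d sW] cnts[of d] d e P by (simp add: pi_star_eq_between_count)
  then show "W \<in> ?L" using sW cnts by (simp add: words_def)
qed

lemma sum_binom_weight_eq_card_words:
  assumes d: "1 \<le> d"
  shows "(\<Sum>w\<in>words d m. \<Sum>P\<in>{P \<in> words_ab (m d) (m (Suc d)).
              (\<Sum>r=0..m d. S_count d w r * pi_star True False P r) = n}.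
             \<Prod>r=0..m d. real ((pi_star True False P r + (\<Sum>l=1..d-1. pi_star d l w r))
                                  choose (pi_star True False P r)))
       = real (card {W \<in> words (Suc d) m. chain_count (Suc d) W = n})"
proof -
  let ?Pn = "\<lambda>w. {P \<in> words_ab (m d) (m (Suc d)).
    (\<Sum>r=0..m d. S_count d w r * pi_star True False P r) = n}"
  have fin_merges: "finite (merges d w P)" if "w \<in> words d m" for w P
    using card_merges[of w d P] that by (simp add: words_def)
  have fin_Pn: "finite (?Pn w)" for w using finite_words_ab by simp
  have "(\<Sum>w\<in>words d m. \<Sum>P\<in>?Pn w. \<Prod>r=0..m d. real
    ((pi_star True False P r + (\<Sum>l=1..d-1. pi_star d l w r))
                                  choose (pi_star True False P r)))
      = (\<Sum>w\<in>words d m. \<Sum>P\<in>?Pn w. real (card (merges d w P)))"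
    by (intro sum.cong refl binom_weight_eq_card_merges[OF d]) auto
  also have "\<dots> = (\<Sum>w\<in>words d m. real (card (\<Union>P\<in>?Pn w. merges d w P)))"
  proof (intro sum.cong refl)
    fix w assume "w \<in> words d m"
    then show "(\<Sum>P\<in>?Pn w. real (card (merges d w P))) = real
      (card (\<Union>P\<in>?Pn w. merges d w P))"
      using fin_merges fin_Pn by (subst card_UN_disjoint) (simp_all add: merges_disjoint)
  qed
  also have "\<dots> = real (card (\<Union>w\<in>words d m. \<Union>P\<in>?Pn w. merges d w P))"
  proof -
    have "card (\<Union>w\<in>words d m. \<Union>P\<in>?Pn w. merges d w P) =
        (\<Sum>w\<in>words d m. card (\<Union>P\<in>?Pn w. merges d w P))"
      using fin_merges fin_Pn finite_words merges_disjoint by (intro card_UN_disjoint) blast+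
    then show ?thesis by simp
  qed
  also have "\<dots> = real (card {W \<in> words (Suc d) m. chain_count (Suc d) W = n})"
    using words_chain_count_eq_Union_merges[OF d] by simp
  finally show ?thesis .
qed

lemma card_words_pos: "0 < card (words d m)"
  using finite_words permutations_of_multiset_not_empty words_eq_permutations by (metis card_gt_0_iff)

lemma emeasure_sandwich:
  assumes "A \<in> sets M" "B \<in> sets M" "Z \<in> null_sets M" "A \<subseteq> B" "B \<subseteq>
    A \<union> Z"
  shows "emeasure M B = emeasure M A"
proof (rule antisym)
  have "emeasure M B \<le> emeasure M (A \<union> Z)" using assms by (intro emeasure_mono) auto
  also have "\<dots> = emeasure M A" using assms by (intro emeasure_Un_null_set) auto
  finally show "emeasure M B \<le> emeasure M A" .
  show "emeasure M A \<le> emeasure M B" using assms by (intro emeasure_mono) auto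
qed

lemma emeasure_split3:
  assumes "A \<in> sets M" "B \<in> sets M" "S \<in> sets M" "A \<inter> B = {}"
  shows "emeasure M S = emeasure M (S \<inter> A) + emeasure M (S \<inter> B) + emeasure M (S - A - B)"
proof -
  have "emeasure M (S \<inter> A) + emeasure M (S \<inter> B) = emeasure M
    ((S \<inter> A) \<union> (S \<inter> B))"
    using assms by (intro plus_emeasure) auto
  moreover have "emeasure M ((S \<inter> A) \<union> (S \<inter> B)) + emeasure M (S - A - B) =
      emeasure M (((S \<inter> A) \<union> (S \<inter> B)) \<union> (S - A - B))"
    using assms by (intro plus_emeasure) auto
  moreover have "((S \<inter> A) \<union> (S \<inter> B)) \<union> (S - A - B) = S" by auto
  ultimately show ?thesis by simp
qed

text \<open>Counting an image through the first preimage of each value turns the cardinalities in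
  lens_count and sigma_k into counts of index sets cut out by measurable conditions.\<close>

lemma card_image_eq_card_first:
  assumes "finite S" "inj_on h S"
  shows "card (g ` S) = card {s\<in>S. \<forall>s'\<in>S. h s' < (h s :: nat) \<longrightarrow> g
    s' \<noteq> g s}"
proof -
  let ?T = "{s\<in>S. \<forall>s'\<in>S. h s' < h s \<longrightarrow> g s' \<noteq> g s}"
  have "bij_betw g ?T (g ` S)"
  proof (rule bij_betw_imageI)
    show "inj_on g ?T"
    proof
      fix s s' assume s: "s \<in> ?T" and s': "s' \<in> ?T" and e: "g s = g s'"
      have "\<not> h s' < h s" "\<not> h s < h s'" using s s' e by auto
      then have "h s = h s'" by simp
      then show "s = s'" using assms(2) s s' by (auto dest: inj_onD)
    qed
  next
    show "g ` ?T = g ` S"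
    proof
      show "g ` ?T \<subseteq> g ` S" by auto
    next
      show "g ` S \<subseteq> g ` ?T"
      proof
        fix y assume "y \<in> g ` S"
        then have ne: "{s\<in>S. g s = y} \<noteq> {}" by auto
        have fin: "finite (h ` {s\<in>S. g s = y})" using assms(1) by simp
        obtain s where s: "s \<in> S" "g s = y" "h s = Min (h ` {s\<in>S. g s = y})"
          using Min_in[OF fin] ne by auto
        have "s \<in> ?T"
        proof -
          have "\<not> h s' < h s" if "s' \<in> S" "g s' = g s" for s'
            using Min_le[OF fin, of "h s'"] that s by auto
          then show ?thesis using s by auto
        qed
        then show "y \<in> g ` ?T" using s by auto
      qed
    qed
  qed
  then show ?thesis by (simp add: bij_betw_same_card)
qed

lemma pred_card_eq:
  assumes "finite T" and R: "\<And>p. p \<in> T \<Longrightarrow> Measurable.pred M (\<lambda>x. R x p)"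
  shows "Measurable.pred M (\<lambda>x. card {p\<in>T. R x p} = c)"
proof -
  have "Measurable.pred M (\<lambda>x. \<exists>S\<in>Pow T. card S = c \<and>
    (\<forall>p\<in>T. R x p = (p \<in> S)))"
    using assms by (intro pred_intros_finite pred_intros_logic) (auto intro: R)
  moreover have "(\<exists>S\<in>Pow T. card S = c \<and> (\<forall>p\<in>T. R x p = (p \<in> S)))
    \<longleftrightarrow> card {p\<in>T. R x p} = c" for x
  proof
    assume "\<exists>S\<in>Pow T. card S = c \<and> (\<forall>p\<in>T. R x p = (p \<in> S))"
    then obtain S where "S \<subseteq> T" "card S = c" "\<forall>p\<in>T. R x p = (p \<in> S)" by auto
    moreover then have "{p\<in>T. R x p} = S" by auto
    ultimately show "card {p\<in>T. R x p} = c" by simp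
  next
    assume "card {p\<in>T. R x p} = c"
    then show "\<exists>S\<in>Pow T. card S = c \<and> (\<forall>p\<in>T. R x p = (p \<in> S))"
      by (intro bexI[of _ "{p\<in>T. R x p}"]) auto
  qed
  ultimately show ?thesis by simp
qed

lemma pred_neq_real[measurable (raw)]:
  assumes [measurable]: "f \<in> borel_measurable M" "g \<in> borel_measurable M"
  shows "Measurable.pred M (\<lambda>x. (f x :: real) \<noteq> g x)"
proof -
  have "Measurable.pred M (\<lambda>x. f x < g x \<or> g x < f x)" by measurable
  moreover have "(f x \<noteq> g x) = (f x < g x \<or> g x < f x)" for x by auto
  ultimately show ?thesis by simp
qed

lemma measurable_count_space_natI:
  assumes "\<And>c. Measurable.pred M (\<lambda>x. f x = (c :: nat))"
  shows "f \<in> measurable M (count_space UNIV)"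
proof -
  have "{x \<in> space M. f x = c} \<in> sets M" for c using assms[of c] unfolding pred_def .
  moreover have "f -` {c} \<inter> space M = {x \<in> space M. f x = c}" for c by auto
  ultimately show ?thesis by (subst measurable_count_space_eq2_countable) auto
qed

lemma emeasure_lborel_translate:
  assumes "S \<in> sets borel" shows "emeasure lborel ((\<lambda>y. c + y) -` S) = emeasure lborel
    (S :: real set)"
proof -
  have "emeasure lborel S = emeasure (distr lborel borel ((+) c)) S" by (simp add: lborel_distr_plus)
  also have "\<dots> = emeasure lborel ((+) c -` S \<inter> space lborel)" using assms
    by (intro emeasure_distr) auto
  finally show ?thesis by simp
qed

lemma ennreal_div1[simp]: "(x::ennreal) / 1 = x"
  by (simp add: divide_ennreal_def)

lemma nn_integral_pmf_ge: "ennreal (pmf p x) * f x \<le> (\<integral>\<^sup>+ y. f y \<partial>measure_pmf p)"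
proof -
  have "(\<integral>\<^sup>+ y. f x * indicator {x} y \<partial>measure_pmf p) \<le>
    (\<integral>\<^sup>+ y. f y \<partial>measure_pmf p)"
    by (intro nn_integral_mono) (auto split: split_indicator)
  then show ?thesis by (simp add: emeasure_pmf_single mult.commute)
qed

lemma (in prob_space) cond_prob_eq_ratio:
  assumes AB: "emeasure M {\<omega> \<in> space M. P \<omega> \<and> Q \<omega>} = of_nat a * I"
    and B: "emeasure M {\<omega> \<in> space M. Q \<omega>} = of_nat b * I"
    and I: "0 < I" and b: "0 < b"
  shows "cond_prob M P Q = real a / real b"
proof -
  have "of_nat b * I \<noteq> \<top>" using B emeasure_finite by metis
  then have fin: "I \<noteq> \<top>" using b by (auto simp: ennreal_mult_eq_top_iff)
  have "cond_prob M P Q = (real a * enn2real I) / (real b * enn2real I)"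
    unfolding cond_prob_def measure_def AB B by (simp add: enn2real_mult)
  also have "\<dots> = real a / real b" using I fin b by (simp add: enn2real_eq_0_iff)
  finally show ?thesis .
qed

section \<open>Sequences of independent uniform points\<close>

abbreviation unif01 :: "real measure" where "unif01 \<equiv> uniform_measure lborel {0..1::real}"
abbreviation unif_seq :: "(nat \<Rightarrow> real) measure" where "unif_seq \<equiv> PiM UNIV
  (\<lambda>_::nat. unif01)"

lemma prob_space_unif01: "prob_space unif01"
  by (intro prob_space_uniform_measure) auto

lemma sets_unif01[simp, measurable_cong]: "sets unif01 = sets borel"
  by simp

lemma prob_space_unif_seq: "prob_space unif_seq"
  by (intro prob_space_PiM prob_space_unif01)

lemma space_unif_seq[simp]: "space unif_seq = UNIV"
  by (auto simp: space_PiM PiE_def extensional_def)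

interpretation unif_prod: product_prob_space "\<lambda>_::nat. unif01" UNIV
  by (intro product_prob_spaceI prob_space_unif01)

lemma emeasure_unif01: "A \<in> sets borel \<Longrightarrow> emeasure unif01 A = emeasure lborel
  ({0..1} \<inter> A)"
  by (subst emeasure_uniform_measure) (auto simp: divide_ennreal_def)

lemma measurable_PiM_coordinatewise:
  assumes "\<And>i. t i \<in> borel_measurable borel"
  shows "(\<lambda>x i. t i (x i)) \<in> measurable unif_seq unif_seq"
proof (rule measurable_PiM_single')
  fix i :: nat
  have "(\<lambda>x. x i) \<in> measurable unif_seq unif01" by (rule measurable_component_singleton) simp
  moreover have "t i \<in> measurable unif01 unif01" using assms[of i] by simp
  ultimately show "(\<lambda>x. t i (x i)) \<in> measurable unif_seq unif01" by (rule measurable_compose)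
qed (auto simp: PiE_def extensional_def)

lemma distr_PiM_coordinatewise:
  assumes t: "\<And>i. t i \<in> borel_measurable borel" and d: "\<And>i. distr unif01 unif01 (t i) = unif01"
  shows "distr unif_seq unif_seq (\<lambda>x i. t i (x i)) = unif_seq"
proof (rule measure_eqI_PiM_infinite[symmetric, OF refl])
  have mt: "(\<lambda>x i. t i (x i)) \<in> measurable unif_seq unif_seq"
    using t by (rule measurable_PiM_coordinatewise)
  show "sets (distr unif_seq unif_seq (\<lambda>x i. t i (x i))) = sets unif_seq" by simp
  show "finite_measure unif_seq" using prob_space_unif_seq by (simp add: prob_space_def)
  fix A J assume J: "finite J" "J \<subseteq> (UNIV :: nat set)" and A: "\<And>i. i \<in> J
    \<Longrightarrow> A i \<in> sets unif01"
  have At: "t j -` A j \<in> sets unif01" if "j \<in> J" for j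
    using A[OF that] t[of j] by (simp add: measurable_sets_borel)
  have pre: "(\<lambda>x i. t i (x i)) -` prod_emb UNIV (\<lambda>_. unif01) J (Pi\<^sub>E J A) =
      prod_emb UNIV (\<lambda>_. unif01) J (Pi\<^sub>E J (\<lambda>j. t j -` A j))"
    by (auto simp: prod_emb_def PiE_def Pi_def extensional_def)
  have "emeasure (distr unif_seq unif_seq (\<lambda>x i. t i (x i)))
    (prod_emb UNIV (\<lambda>_. unif01) J (Pi\<^sub>E J A)) =
      emeasure unif_seq (prod_emb UNIV (\<lambda>_. unif01) J (Pi\<^sub>E J (\<lambda>j. t j -` A j)))"
    using mt J A by (subst emeasure_distr) (auto intro!: sets_PiM_I simp: pre)
  also have "\<dots> = (\<Prod>j\<in>J. emeasure unif01 (t j -` A j))"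
    using J At by (intro unif_prod.emeasure_PiM_emb) auto
  also have "\<dots> = (\<Prod>j\<in>J. emeasure unif01 (A j))"
  proof (rule prod.cong[OF refl])
    fix j assume j: "j \<in> J"
    have "emeasure unif01 (A j) = emeasure (distr unif01 unif01 (t j)) (A j)" using d[of j] by simp
    also have "\<dots> = emeasure unif01 (t j -` A j \<inter> space unif01)"
      using A[OF j] t[of j] by (intro emeasure_distr) auto
    finally show "emeasure unif01 (t j -` A j) = emeasure unif01 (A j)" by simp
  qed
  also have "\<dots> = emeasure unif_seq (prod_emb UNIV (\<lambda>_. unif01) J (Pi\<^sub>E J A))"
    using J A by (intro unif_prod.emeasure_PiM_emb[symmetric]) auto
  finally show "emeasure unif_seq (prod_emb UNIV (\<lambda>_. unif01) J (Pi\<^sub>E J A)) =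
      emeasure (distr unif_seq unif_seq (\<lambda>x i. t i (x i)))
        (prod_emb UNIV (\<lambda>_. unif01) J (Pi\<^sub>E J A))" by simp
qed

lemma unif_seq_eq_distr_insert:
  "unif_seq = distr (unif01 \<Otimes>\<^sub>M PiM (UNIV - {i}) (\<lambda>_. unif01)) unif_seq
    (\<lambda>(s, X). X(i := s))"
  using distr_pair_PiM_eq_PiM[of "UNIV - {i}" "\<lambda>_. unif01" i] prob_space_unif01
  by (simp add: insert_absorb)

lemma measurable_insert_coordinate:
  "(\<lambda>(s, X). X(i := s)) \<in> measurable
    (unif01 \<Otimes>\<^sub>M PiM (UNIV - {i}) (\<lambda>_. unif01)) unif_seq"
proof -
  let ?Q = "PiM (UNIV - {i}) (\<lambda>_::nat. unif01)"
  have m1: "(\<lambda>(s, X). (X, s)) \<in> measurable (unif01 \<Otimes>\<^sub>M ?Q)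
    (?Q \<Otimes>\<^sub>M unif01)"
    by measurable
  have m2: "(\<lambda>(f, y). f(i := y)) \<in> measurable (?Q \<Otimes>\<^sub>M unif01)
    (PiM (insert i (UNIV - {i})) (\<lambda>_. unif01))"
    using measurable_add_dim[where I="UNIV - {i}" and M="\<lambda>_. unif01" and i=i] by simp
  show ?thesis
    using measurable_comp[OF m1 m2] by (simp add: comp_def case_prod_beta insert_absorb)
qed

text \<open>Fubini over the coordinate i: for fixed values of the other coordinates the set is a
  single point.\<close>

lemma difference_level_set_null:
  assumes "i \<noteq> i'"
  shows "{x :: nat \<Rightarrow> real. x i - x i' = c} \<in> null_sets unif_seq"
proof -
  let ?Q = "PiM (UNIV - {i}) (\<lambda>_::nat. unif01)"
  let ?S = "{(s, X). s = X i' + c} \<inter> space (unif01 \<Otimes>\<^sub>M ?Q)"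
  have "Measurable.pred unif_seq (\<lambda>x. x i - x i' = c)" by measurable
  then have S: "{x :: nat \<Rightarrow> real. x i - x i' = c} \<in> sets unif_seq" by (simp add: pred_def)
  have pre: "(\<lambda>(s, X). X(i := s)) -` {x. x i - x i' = c} \<inter> space
    (unif01 \<Otimes>\<^sub>M ?Q) = ?S"
    using assms by auto
  have S2: "?S \<in> sets (unif01 \<Otimes>\<^sub>M ?Q)"
  proof -
    have "(\<lambda>X. X i') \<in> measurable ?Q unif01" using assms
      by (intro measurable_component_singleton) auto
    then have "(\<lambda>X. X i') \<in> borel_measurable ?Q"
      by (simp add: measurable_cong_sets[OF refl sets_unif01])
    then have "Measurable.pred (unif01 \<Otimes>\<^sub>M ?Q) (\<lambda>p. fst p = snd p i' + c)" by measurable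
    moreover have "?S = {x \<in> space (unif01 \<Otimes>\<^sub>M ?Q). fst x = snd x i' + c}" by auto
    ultimately show ?thesis by (simp add: pred_def)
  qed
  interpret pq: pair_sigma_finite unif01 ?Q
    using prob_space_unif01 by (intro pair_sigma_finite.intro prob_space_imp_sigma_finite prob_space_PiM)
  have "emeasure unif_seq {x. x i - x i' = c} = emeasure (unif01 \<Otimes>\<^sub>M ?Q) ?S"
    by (subst unif_seq_eq_distr_insert[of i], subst
      emeasure_distr[OF measurable_insert_coordinate]) (use S unif_seq_eq_distr_insert[of i] pre in auto)
  also have "\<dots> = \<integral>\<^sup>+ X. emeasure unif01 ((\<lambda>s. (s, X)) -` ?S) \<partial>?Q"
    by (rule pq.emeasure_pair_measure_alt2[OF S2])
  also have "\<dots> = \<integral>\<^sup>+ X. 0 \<partial>?Q"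
  proof (rule nn_integral_cong)
    fix X assume X: "X \<in> space ?Q"
    have "emeasure unif01 {X i' + c} = emeasure lborel ({0..1} \<inter> {X i' + c})"
      by (rule emeasure_unif01) simp
    also have "\<dots> \<le> emeasure lborel {X i' + c}" by (rule emeasure_mono) auto
    finally have "emeasure unif01 {X i' + c} = 0" by simp
    moreover have "(\<lambda>s. (s, X)) -` ?S = {X i' + c}" using X by (auto simp: space_pair_measure)
    ultimately show "emeasure unif01 ((\<lambda>s. (s, X)) -` ?S) = 0" by simp
  qed
  finally show ?thesis using S by (simp add: null_sets_def)
qed

section \<open>Hop paths\<close>

lemma hop_path_nth_upper:
  assumes vs: "vs \<in> hop_paths r0 k \<omega>" and j: "1 \<le> j" "j \<le> k"
  shows "vs ! j < real j * r0"
proof -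
  have ad: "\<And>i. i < k \<Longrightarrow> vs ! Suc i < vs ! i + r0" and v0: "vs ! 0 = 0"
    using vs by (auto simp: hop_paths_def adj_def abs_less_iff)
  have "i \<le> k \<Longrightarrow> vs ! i \<le> real i * r0 \<and>
    (1 \<le> i \<longrightarrow> vs ! i < real i * r0)" for i
  proof (induction i)
    case (Suc i)
    then show ?case using ad[of i] by (simp add: algebra_simps)
  qed (use v0 in simp)
  then show ?thesis using j by simp
qed

lemma hop_path_nth_lower:
  assumes vs: "vs \<in> hop_paths r0 k \<omega>" and j: "j < k"
  shows "1 - real (k - j) * r0 < vs ! j"
proof -
  have ad: "\<And>i. i < k \<Longrightarrow> vs ! Suc i - r0 < vs ! i" and vk: "vs ! k = 1"
    using vs by (auto simp: hop_paths_def adj_def abs_less_iff)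
  have "i \<le> k \<Longrightarrow> 1 - real i * r0 \<le> vs ! (k - i) \<and>
    (1 \<le> i \<longrightarrow> 1 - real i * r0 < vs ! (k - i))" for i
  proof (induction i)
    case (Suc i)
    then have "Suc (k - Suc i) = k - i" by simp
    then show ?case using Suc ad[of "k - Suc i"] by (simp add: algebra_simps)
  qed (use vk in simp)
  from this[of "k - j"] show ?thesis using j by simp
qed

section \<open>Geometry of the lenses\<close>

locale lens_geometry =
  fixes r0 :: real and k :: nat
  assumes k_ge_3: "3 \<le> k" and r0_gt: "1 / real k < r0" and r0_lt: "r0 < 1 / real (k - 1)"
begin

definition lens_width :: real where "lens_width = real k * r0 - 1"

definition lens_start :: "nat \<Rightarrow> real" where "lens_start j = 1 - real (k - j) * r0"

lemma k_pos: "real k > 0" using k_ge_3 by simp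

lemma k_r0_gt_1: "real k * r0 > 1"
  using r0_gt k_pos by (simp add: field_simps)

lemma k_minus_1_r0_lt_1: "real (k - 1) * r0 < 1"
proof -
  have "real (k - 1) > 0" using k_ge_3 by simp
  then show ?thesis using r0_lt by (simp add: field_simps)
qed

lemma r0_pos: "r0 > 0"
  using r0_gt k_pos by (smt (verit) divide_pos_pos)

lemma lens_width_pos: "lens_width > 0" using k_r0_gt_1 by (simp add: lens_width_def)

lemma lens_width_less: "lens_width < r0"
proof -
  have "real (k - 1) = real k - 1" using k_ge_3 by simp
  then show ?thesis using k_minus_1_r0_lt_1 by (simp add: lens_width_def algebra_simps)
qed

lemma lens_eq_start: "j \<le> k \<Longrightarrow> lens r0 k j = {lens_start j <..< lens_start j + lens_width}"
  by (simp add: lens_def lens_start_def lens_width_def of_nat_diff algebra_simps)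

lemma lens_start_Suc: "j < k \<Longrightarrow> lens_start (Suc j) = lens_start j + r0"
  by (simp add: lens_start_def of_nat_diff algebra_simps)

lemma lens_subset_01:
  assumes "j \<in> {1..k-1}" shows "lens r0 k j \<subseteq> {0<..<1}"
proof -
  have "k - j \<le> k - 1" using assms by auto
  then have "real (k - j) \<le> real (k - 1)" by (rule of_nat_mono)
  then have a: "real (k - j) * r0 < 1" using k_minus_1_r0_lt_1 r0_pos by (smt (verit) mult_right_mono)
  have "real j \<le> real (k - 1)" using assms by simp
  then have b: "real j * r0 < 1" using k_minus_1_r0_lt_1 r0_pos by (smt (verit) mult_right_mono)
  show ?thesis using a b by (auto simp: lens_def)
qed

lemma lens_disjoint:
  assumes i: "i \<in> {1..k-1}" and j: "j \<in> {1..k-1}" and ij: "i \<noteq> j"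
  shows "lens r0 k i \<inter> lens r0 k j = {}"
proof -
  have *: "lens r0 k a \<inter> lens r0 k b = {}" if a: "a \<in> {1..k-1}" "b \<in> {1..k-1}" "a < b" for a b
  proof (rule ccontr)
    assume "lens r0 k a \<inter> lens r0 k b \<noteq> {}"
    then obtain y where "y \<in> lens r0 k a \<inter> lens r0 k b" by blast
    then have y1: "y < real a * r0" and y2: "1 - real (k - b) * r0 < y"
      by (auto simp: lens_def)
    have "real (k - b) + real a \<le> real (k - 1)" using a by simp
    then have "(real (k - b) + real a) * r0 \<le> real (k - 1) * r0" using r0_pos
      by (simp add: mult_right_mono)
    then have "real (k - b) * r0 + real a * r0 \<le> real (k - 1) * r0" by (simp only: distrib_right)
    then show False using y1 y2 k_minus_1_r0_lt_1 by linarith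
  qed
  show ?thesis
  proof (cases "i < j")
    case True then show ?thesis using * i j by blast
  next
    case False then have "j < i" using ij by simp
    then show ?thesis using * i j by blast
  qed
qed

lemma adj_consecutive_lenses:
  assumes j: "1 \<le> j" "Suc j \<le> k - 1" and v: "v \<in> lens r0 k j" and v': "v' \<in> lens r0 k (Suc j)"
  shows "adj r0 v v' \<longleftrightarrow> v' - lens_start (Suc j) < v - lens_start j"
proof -
  have v1: "lens_start j < v" "v < lens_start j + lens_width" using v j lens_eq_start[of j] by auto
  have v2: "lens_start (Suc j) < v'" "v' < lens_start (Suc j) + lens_width"
    using v' j lens_eq_start[of "Suc j"] by auto
  have s: "lens_start (Suc j) = lens_start j + r0" using j lens_start_Suc by simp
  have "v < v'" using v1 v2 s lens_width_less by simp
  then show ?thesis using s by (auto simp: adj_def)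
qed

lemma adj_0_lens: assumes "v \<in> lens r0 k 1" shows "adj r0 0 v"
proof -
  have "1 \<in> {1..k-1}" using k_ge_3 by simp
  then have "lens r0 k 1 \<subseteq> {0<..<1}" by (rule lens_subset_01)
  then have "v \<in> {0<..<1}" using assms by blast
  moreover have "v < r0" using assms by (simp add: lens_def)
  ultimately show ?thesis by (simp add: adj_def)
qed

lemma adj_lens_1: assumes "v \<in> lens r0 k (k - 1)" shows "adj r0 v 1"
proof -
  have "k - 1 \<in> {1..k-1}" using k_ge_3 by simp
  then have "lens r0 k (k - 1) \<subseteq> {0<..<1}" by (rule lens_subset_01)
  then have "v \<in> {0<..<1}" using assms by blast
  moreover have "1 - r0 < v" using assms k_ge_3 by (simp add: lens_def)
  ultimately show ?thesis by (simp add: adj_def)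
qed

lemma hop_path_nth_in_lens:
  assumes vs: "vs \<in> hop_paths r0 k \<omega>" and j: "j \<in> {1..k-1}"
  shows "vs ! j \<in> lens r0 k j \<inter> points \<omega>"
proof -
  have "1 \<le> j" "j \<le> k" "j < k" using j by auto
  then have L: "vs ! j \<in> lens r0 k j"
    using hop_path_nth_upper[OF vs] hop_path_nth_lower[OF vs] unfolding lens_def by simp
  have "vs ! j \<in> vertices \<omega>" using vs j by (auto simp: hop_paths_def intro: nth_mem)
  moreover have "vs ! j \<noteq> 0" "vs ! j \<noteq> 1" using lens_subset_01[OF j] L by auto
  ultimately show ?thesis using L by (auto simp: vertices_def)
qed

section \<open>Arrangements of points in the lenses\<close>

text \<open>In an arrangement, \<iota> lists the indices below N of the points lying in lenses, ordered by
  decreasing offset, and W is the word of their lenses.\<close>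

definition arrangement :: "nat \<Rightarrow> nat list \<Rightarrow> nat list \<Rightarrow>
  (nat \<Rightarrow> real) set" where
  "arrangement N \<iota> W = {x. (\<forall>p<length \<iota>. x (\<iota> ! p) \<in> lens r0 k (W ! p)) \<and>
      (\<forall>i<N. i \<notin> set \<iota> \<longrightarrow>
        (\<forall>j\<in>{1..k-1}. x i \<notin> lens r0 k j)) \<and>
      (\<forall>p. Suc p < length \<iota> \<longrightarrow> x (\<iota> ! Suc p) - lens_start
        (W ! Suc p) < x (\<iota> ! p) - lens_start (W ! p))}"

definition chain_path :: "(nat \<Rightarrow> real) \<Rightarrow> nat list \<Rightarrow>
  (nat \<Rightarrow> nat) \<Rightarrow> real list" where
  "chain_path x \<iota> p = 0 # map (\<lambda>j. x (\<iota> ! p j)) [1..<k] @ [1]"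

lemma length_chain_path: "length (chain_path x \<iota> p) = Suc k"
  using k_ge_3 by (simp add: chain_path_def)

lemma chain_path_0: "chain_path x \<iota> p ! 0 = 0"
  by (simp add: chain_path_def)

lemma chain_path_k: "chain_path x \<iota> p ! k = 1"
proof -
  have "chain_path x \<iota> p ! k = (map (\<lambda>j. x (\<iota> ! p j)) [1..<k] @ [1]) ! (k - 1)"
    using k_ge_3 by (simp add: chain_path_def nth_Cons')
  also have "\<dots> = 1" using k_ge_3 by (simp add: nth_append)
  finally show ?thesis .
qed

lemma chain_path_nth: "j \<in> {1..k-1} \<Longrightarrow> chain_path x \<iota> p ! j = x (\<iota> ! p j)"
  by (cases j) (auto simp: chain_path_def nth_append)

lemma hop_path_eq_chain_path:
  assumes "vs \<in> hop_paths r0 k \<omega>" and "\<And>j. j \<in> {1..k-1} \<Longrightarrow> vs !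
    j = x (\<iota> ! p j)"
  shows "vs = chain_path x \<iota> p"
proof (rule nth_equalityI)
  show "length vs = length (chain_path x \<iota> p)"
    using assms(1) length_chain_path by (simp add: hop_paths_def)
next
  fix i assume "i < length vs"
  then have "i = 0 \<or> i = k \<or> i \<in> {1..k-1}" using assms(1) by (auto simp: hop_paths_def)
  then show "vs ! i = chain_path x \<iota> p ! i"
    using assms chain_path_0 chain_path_k chain_path_nth by (auto simp: hop_paths_def)
qed

lemma chain_path_in_hop_paths:
  assumes "\<And>j. j \<in> {1..k-1} \<Longrightarrow> \<iota> ! p j < N"
    and "adj r0 0 (x (\<iota> ! p 1))" and "adj r0 (x (\<iota> ! p (k - 1))) 1"
    and "\<And>j. j \<in> {1..<k-1} \<Longrightarrow> adj r0 (x (\<iota> ! p j)) (x (\<iota> ! p (Suc j)))"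
  shows "chain_path x \<iota> p \<in> hop_paths r0 k (N, x)"
proof -
  let ?vs = "chain_path x \<iota> p"
  have "set ?vs \<subseteq> vertices (N, x)"
    using assms(1) by (auto simp: chain_path_def vertices_def points_def)
  moreover have "adj r0 (?vs ! i) (?vs ! Suc i)" if i: "i < k" for i
  proof -
    consider "i = 0" | "i = k - 1" "i \<noteq> 0" | "i \<in> {1..<k-1}" using i by fastforce
    then show ?thesis
    proof cases
      case 1 then show ?thesis using assms(2) k_ge_3 by (simp add: chain_path_0 chain_path_nth)
    next
      case 2 then show ?thesis using assms(3) k_ge_3 by (simp add: chain_path_k chain_path_nth)
    next
      case 3 then show ?thesis using assms(4) by (simp add: chain_path_nth)
    qed
  qed
  ultimately show ?thesis by (simp add: hop_paths_def length_chain_path chain_path_0 chain_path_k)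
qed

lemma lens_unique: "x \<in> lens r0 k i \<Longrightarrow> x \<in> lens r0 k j \<Longrightarrow> i
  \<in> {1..k-1} \<Longrightarrow> j \<in> {1..k-1} \<Longrightarrow> i = j"
  using lens_disjoint by blast

context
  fixes N \<iota> W x
  assumes F: "x \<in> arrangement N \<iota> W" and sub: "set \<iota> \<subseteq> {..<N}"
    and Wsub: "set W \<subseteq> {1..k-1}" and Wlen: "length W = length \<iota>"
begin

lemma arrangement_in_lens: "p < length \<iota> \<Longrightarrow> x (\<iota> ! p) \<in> lens r0 k (W ! p)"
  using F by (simp add: arrangement_def)

lemma arrangement_word_range: "p < length \<iota> \<Longrightarrow> W ! p \<in> {1..k-1}"
  using Wsub Wlen by (metis nth_mem subsetD)

lemma arrangement_offset_less: "p < q \<Longrightarrow> q < length \<iota> \<Longrightarrow> x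
  (\<iota> ! q) - lens_start (W ! q) < x (\<iota> ! p) - lens_start (W ! p)"
proof (induction q rule: less_induct)
  case (less q)
  obtain q' where q': "q = Suc q'" using less.prems by (cases q) auto
  have step: "x (\<iota> ! q) - lens_start (W ! q) < x (\<iota> ! q') - lens_start (W ! q')"
    using F less.prems q' by (simp add: arrangement_def)
  show ?case
  proof (cases "p = q'")
    case True then show ?thesis using step by simp
  next
    case False
    then have "x (\<iota> ! q') - lens_start (W ! q') < x (\<iota> ! p) - lens_start (W ! p)"
      using less.IH[of q'] less.prems q' by auto
    then show ?thesis using step by simp
  qed
qed

lemma arrangement_inj: assumes "p < length \<iota>" "q < length \<iota>" "x (\<iota> ! p) = x
  (\<iota> ! q)" shows "p = q"
proof -
  have "W ! p = W ! q"
    using lens_unique[OF arrangement_in_lens[OF assms(1)]] arrangement_in_lens[OF assms(2)]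
      arrangement_word_range assms by simp
  then show "p = q"
    using arrangement_offset_less[of p q] arrangement_offset_less[of q p] assms
      by (cases "p < q"; cases "q < p") auto
qed

lemma arrangement_covers:
  assumes "i < N" "j \<in> {1..k-1}" "x i \<in> lens r0 k j"
  shows "\<exists>p<length \<iota>. \<iota> ! p = i \<and> W ! p = j"
proof -
  have "i \<in> set \<iota>" using F assms by (auto simp: arrangement_def)
  then obtain p where p: "p < length \<iota>" "\<iota> ! p = i" by (auto simp: in_set_conv_nth)
  have "W ! p = j" using lens_unique[OF arrangement_in_lens[OF p(1)]] p arrangement_word_range assms by simp
  then show ?thesis using p by blast
qed

lemma arrangement_card_lens:
  assumes j: "j \<in> {1..k-1}"
  shows "card (x ` {..<N} \<inter> lens r0 k j) = count_list W j"
proof -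
  have e: "x ` {..<N} \<inter> lens r0 k j = (\<lambda>p. x (\<iota> ! p)) `
    {p. p < length \<iota> \<and> W ! p = j}"
  proof (intro set_eqI iffI)
    fix y assume "y \<in> x ` {..<N} \<inter> lens r0 k j"
    then obtain i where i: "i < N" "y = x i" "x i \<in> lens r0 k j" by auto
    obtain p where "p < length \<iota>" "\<iota> ! p = i" "W ! p = j"
      using arrangement_covers[OF i(1) j i(3)] by blast
    then show "y \<in> (\<lambda>p. x (\<iota> ! p)) ` {p. p < length \<iota> \<and> W ! p = j}"
      using i by auto
  next
    fix y assume "y \<in> (\<lambda>p. x (\<iota> ! p)) ` {p. p < length \<iota> \<and> W ! p = j}"
    then obtain p where p: "p < length \<iota>" "W ! p = j" "y = x (\<iota> ! p)" by auto
    have "\<iota> ! p < N" using sub p(1) by (meson lessThan_iff nth_mem subsetD)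
    then show "y \<in> x ` {..<N} \<inter> lens r0 k j" using arrangement_in_lens[OF p(1)] p by auto
  qed
  have "inj_on (\<lambda>p. x (\<iota> ! p)) {p. p < length \<iota> \<and> W ! p = j}"
    using arrangement_inj by (auto simp: inj_on_def)
  then have "card (x ` {..<N} \<inter> lens r0 k j) = card {p. p < length \<iota> \<and> W ! p = j}"
    unfolding e by (rule card_image)
  then show ?thesis using Wlen by (simp add: count_list_eq_card)
qed

lemma chain_path_inj_on: "inj_on (chain_path x \<iota>) (letter_chains (k - 1) W)"
proof
  fix p p' assume p: "p \<in> letter_chains (k - 1) W" and p': "p' \<in> letter_chains (k - 1) W"
    and e: "chain_path x \<iota> p = chain_path x \<iota> p'"
  show "p = p'"
  proof (rule PiE_ext)
    show "p \<in> {1..k-1} \<rightarrow>\<^sub>E {..<length W}" "p' \<in> {1..k-1}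
      \<rightarrow>\<^sub>E {..<length W}"
      using p p' by (auto simp: letter_chains_def)
  next
    fix j assume j: "j \<in> {1..k-1}"
    have "x (\<iota> ! p j) = x (\<iota> ! p' j)" using e chain_path_nth[OF j, of x \<iota>] by metis
    moreover have "p j < length \<iota>" "p' j < length \<iota>"
      using p p' j Wlen by (auto simp: letter_chains_def PiE_def Pi_def)
    ultimately show "p j = p' j" using arrangement_inj by blast
  qed
qed

lemma chain_path_arrangement_in_hop_paths:
  assumes p: "p \<in> letter_chains (k - 1) W"
  shows "chain_path x \<iota> p \<in> hop_paths r0 k (N, x)"
proof (rule chain_path_in_hop_paths)
  have pl: "p j < length \<iota>" if "j \<in> {1..k-1}" for j
    using p that Wlen by (auto simp: letter_chains_def PiE_def Pi_def)
  have pw: "W ! p j = j" if "j \<in> {1..k-1}" for j using p that by (auto simp: letter_chains_def)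
  have pm: "x (\<iota> ! p j) \<in> lens r0 k j" if "j \<in> {1..k-1}" for j
    using arrangement_in_lens[OF pl[OF that]] pw[OF that] by simp
  show "\<iota> ! p j < N" if "j \<in> {1..k-1}" for j
    using pl[OF that] sub by (auto dest: nth_mem)
  show "adj r0 0 (x (\<iota> ! p 1))" using adj_0_lens pm[of 1] k_ge_3 by simp
  show "adj r0 (x (\<iota> ! p (k - 1))) 1" using adj_lens_1 pm[of "k - 1"] k_ge_3 by simp
  fix j assume j: "j \<in> {1..<k-1}"
  then have ji: "j \<in> {1..k-1}" "Suc j \<in> {1..k-1}" and jj: "1 \<le> j" "Suc j \<le> k - 1" by auto
  have "p j < p (Suc j)" using p j by (auto simp: letter_chains_def)
  then have "x (\<iota> ! p (Suc j)) - lens_start (Suc j) < x (\<iota> ! p j) - lens_start j"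
    using arrangement_offset_less[OF _ pl[OF ji(2)]] pw ji by fastforce
  then show "adj r0 (x (\<iota> ! p j)) (x (\<iota> ! p (Suc j)))"
    using adj_consecutive_lenses[OF jj pm[OF ji(1)] pm[OF ji(2)]] by simp
qed

text \<open>Along a hop path the offsets decrease, and in an arrangement the offsets decrease
  exactly along the list of indices; so the positions of the path's points form a chain.\<close>

lemma hop_path_in_chain_path_image:
  assumes vs: "vs \<in> hop_paths r0 k (N, x)"
  shows "vs \<in> chain_path x \<iota> ` letter_chains (k - 1) W"
proof -
  have ad: "\<And>i. i < k \<Longrightarrow> adj r0 (vs ! i) (vs ! Suc i)" using vs
    by (auto simp: hop_paths_def)
  have ex: "\<exists>q. q < length \<iota> \<and> W ! q = j \<and> x (\<iota> ! q) = vs ! j" if j: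
    "j \<in> {1..k-1}" for j
  proof -
    have "vs ! j \<in> lens r0 k j \<inter> x ` {..<N}"
      using hop_path_nth_in_lens[OF vs j] by (simp add: points_def)
    then obtain i where i: "i < N" "vs ! j = x i" "x i \<in> lens r0 k j" by auto
    then show ?thesis using arrangement_covers[OF i(1) j i(3)] by auto
  qed
  define p where "p = (\<lambda>j\<in>{1..k-1}. SOME q. q < length \<iota> \<and> W ! q = j \<and>
    x (\<iota> ! q) = vs ! j)"
  have pp: "p j < length \<iota> \<and> W ! p j = j \<and> x (\<iota> ! p j) = vs ! j" if j: "j
    \<in> {1..k-1}" for j
    using someI_ex[OF ex[OF j]] j by (simp add: p_def)
  have "p \<in> letter_chains (k - 1) W"
    unfolding letter_chains_def
  proof (intro CollectI conjI ballI)
    show "p \<in> {1..k-1} \<rightarrow>\<^sub>E {..<length W}" using pp Wlen by (auto simp: p_def)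
  next
    fix j assume "j \<in> {1..k-1}" then show "W ! p j = j" using pp by simp
  next
    fix j assume j: "j \<in> {1..<k-1}"
    then have ji: "j \<in> {1..k-1}" "Suc j \<in> {1..k-1}" and jj: "1 \<le> j" "Suc j \<le> k - 1" by auto
    have "vs ! Suc j - lens_start (Suc j) < vs ! j - lens_start j"
      using ad[of j] jj adj_consecutive_lenses[OF jj] hop_path_nth_in_lens[OF vs ji(1)]
        hop_path_nth_in_lens[OF vs ji(2)] by simp
    then have "\<not> p (Suc j) \<le> p j"
      using arrangement_offset_less[of "p (Suc j)" "p j"] pp[OF ji(1)] pp[OF ji(2)]
      by (metis le_neq_implies_less less_asym)
    then show "p j < p (Suc j)" by simp
  qed
  moreover have "vs = chain_path x \<iota> p" using hop_path_eq_chain_path[OF vs] pp by simp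
  ultimately show ?thesis by blast
qed

lemma arrangement_hop_paths: "card (hop_paths r0 k (N, x)) = chain_count (k - 1) W"
proof -
  have "bij_betw (chain_path x \<iota>) (letter_chains (k - 1) W) (hop_paths r0 k (N, x))"
    using chain_path_inj_on chain_path_arrangement_in_hop_paths hop_path_in_chain_path_image
    by (intro bij_betw_imageI) blast+
  then show ?thesis unfolding chain_count_def by (simp add: bij_betw_same_card)
qed

end

definition lens_of :: "(nat \<Rightarrow> real) \<Rightarrow> nat \<Rightarrow> nat" where
  "lens_of x i = (THE j. j \<in> {1..k-1} \<and> x i \<in> lens r0 k j)"

lemma lens_of_eq: "j \<in> {1..k-1} \<Longrightarrow> x i \<in> lens r0 k j \<Longrightarrow> lens_of x i = j"
  unfolding lens_of_def by (rule the_equality) (auto dest: lens_unique)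

definition lens_offset :: "(nat \<Rightarrow> real) \<Rightarrow> nat \<Rightarrow> real" where
  "lens_offset x i = x i - lens_start (lens_of x i)"

definition lens_points :: "nat \<Rightarrow> (nat \<Rightarrow> real) \<Rightarrow> nat set" where
  "lens_points N x = {i. i < N \<and> (\<exists>j\<in>{1..k-1}. x i \<in> lens r0 k j)}"

definition offset_ties :: "nat \<Rightarrow> (nat \<Rightarrow> real) set" where
  "offset_ties N = {x. \<exists>i<N. \<exists>i'<N. i \<noteq> i' \<and>
    (\<exists>j\<in>{1..k-1}. \<exists>j'\<in>{1..k-1}. x i - x i' = lens_start j - lens_start j')}"

definition offset_order :: "nat \<Rightarrow> (nat \<Rightarrow> real) \<Rightarrow> nat list" where
  "offset_order N x = sort_key (\<lambda>i. - lens_offset x i) (sorted_list_of_set (lens_points N x))"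

lemma lens_of_range: "i \<in> lens_points N x \<Longrightarrow> lens_of x i \<in> {1..k-1} \<and> x
  i \<in> lens r0 k (lens_of x i)"
  unfolding lens_points_def using lens_of_eq by auto

lemma inj_on_lens_offset:
  assumes "x \<notin> offset_ties N"
  shows "inj_on (lens_offset x) (lens_points N x)"
proof
  fix i i' assume i: "i \<in> lens_points N x" and i': "i' \<in> lens_points N x"
    and e: "lens_offset x i = lens_offset x i'"
  show "i = i'"
  proof (rule ccontr)
    assume "i \<noteq> i'"
    moreover have "x i - x i' = lens_start (lens_of x i) - lens_start (lens_of x i')"
      using e by (simp add: lens_offset_def)
    ultimately have "x \<in> offset_ties N"
      using i i' lens_of_range[OF i] lens_of_range[OF i'] unfolding offset_ties_def lens_points_def by blast
    then show False using assms by simp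
  qed
qed

lemma offset_order_arrangement:
  assumes Z: "x \<notin> offset_ties N"
  defines "\<iota> \<equiv> offset_order N x"
  shows "distinct \<iota>" "set \<iota> = lens_points N x" "set \<iota> \<subseteq> {..<N}" "set
    (map (lens_of x) \<iota>) \<subseteq> {1..k-1}"
    "x \<in> arrangement N \<iota> (map (lens_of x) \<iota>)"
proof -
  have fin: "finite (lens_points N x)" unfolding lens_points_def by auto
  show d: "distinct \<iota>" unfolding \<iota>_def offset_order_def by simp
  show s: "set \<iota> = lens_points N x" unfolding \<iota>_def offset_order_def using fin by simp
  then show "set \<iota> \<subseteq> {..<N}" by (auto simp: lens_points_def)
  show "set (map (lens_of x) \<iota>) \<subseteq> {1..k-1}" using s lens_of_range by auto
  have inj: "inj_on (\<lambda>i. - lens_offset x i) (lens_points N x)"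
    using inj_on_lens_offset[OF Z] by (simp add: inj_on_def)
  have srt: "sorted (map (\<lambda>i. - lens_offset x i) \<iota>)"
    unfolding \<iota>_def offset_order_def by (rule sorted_sort_key)
  have dm: "distinct (map (\<lambda>i. - lens_offset x i) \<iota>)" using d inj s by (simp add: distinct_map)
  have ss: "sorted_wrt (<) (map (\<lambda>i. - lens_offset x i) \<iota>)" using srt dm
    by (simp add: strict_sorted_iff)
  show "x \<in> arrangement N \<iota> (map (lens_of x) \<iota>)"
    unfolding arrangement_def
  proof (intro CollectI conjI allI impI ballI)
    fix p assume p: "p < length \<iota>"
    then have "\<iota> ! p \<in> lens_points N x" using s nth_mem by blast
    then show "x (\<iota> ! p) \<in> lens r0 k (map (lens_of x) \<iota> ! p)" using lens_of_range p by simp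
  next
    fix i j assume "i < N" "i \<notin> set \<iota>" "j \<in> {1..k-1}"
    then show "x i \<notin> lens r0 k j" using s by (auto simp: lens_points_def)
  next
    fix p assume p: "Suc p < length \<iota>"
    have "map (\<lambda>i. - lens_offset x i) \<iota> ! p < map (\<lambda>i. - lens_offset x i)
      \<iota> ! Suc p"
      using sorted_wrt_nth_less[OF ss, of p "Suc p"] p by simp
    then show "x (\<iota> ! Suc p) - lens_start (map (lens_of x) \<iota> ! Suc p) < x (\<iota> ! p)
      - lens_start (map (lens_of x) \<iota> ! p)"
      using p by (simp add: lens_offset_def)
  qed
qed

lemma arrangement_determined:
  assumes F: "x \<in> arrangement N \<iota> W" and sub: "set \<iota> \<subseteq> {..<N}"
    and Wsub: "set W \<subseteq> {1..k-1}" and Wlen: "length W = length \<iota>"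
  shows "set \<iota> = lens_points N x" "W = map (lens_of x) \<iota>"
    "sorted_wrt (<) (map (\<lambda>i. - lens_offset x i) \<iota>)"
proof -
  note FF = arrangement_in_lens[OF F sub Wsub Wlen] arrangement_word_range[OF F sub Wsub Wlen]
    arrangement_covers[OF F sub Wsub Wlen] arrangement_offset_less[OF F sub Wsub Wlen]
  show "set \<iota> = lens_points N x"
  proof (intro set_eqI iffI)
    fix i assume "i \<in> set \<iota>"
    then obtain p where p: "p < length \<iota>" "\<iota> ! p = i" by (auto simp: in_set_conv_nth)
    have "\<iota> ! p \<in> set \<iota>" using p(1) by simp
    then have "i < N" using sub p(2) by auto
    then show "i \<in> lens_points N x" using FF(1)[OF p(1)] FF(2)[OF p(1)] p(2)
      by (auto simp: lens_points_def)
  next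
    fix i assume "i \<in> lens_points N x"
    then obtain j where "i < N" "j \<in> {1..k-1}" "x i \<in> lens r0 k j" by (auto simp: lens_points_def)
    then obtain p where "p < length \<iota>" "\<iota> ! p = i" using FF(3) by blast
    then show "i \<in> set \<iota>" by auto
  qed
  have cw: "lens_of x (\<iota> ! p) = W ! p" if "p < length \<iota>" for p
    using lens_of_eq[of "W ! p" x "\<iota> ! p", OF FF(2)[OF that] FF(1)[OF that]] .
  show "W = map (lens_of x) \<iota>" by (rule nth_equalityI) (auto simp: Wlen cw)
  show "sorted_wrt (<) (map (\<lambda>i. - lens_offset x i) \<iota>)"
  proof (subst sorted_wrt_iff_nth_less, intro allI impI)
    fix p q assume "p < q" "q < length (map (\<lambda>i. - lens_offset x i) \<iota>)"
    then show "map (\<lambda>i. - lens_offset x i) \<iota> ! p < map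
      (\<lambda>i. - lens_offset x i) \<iota> ! q"
      using FF(4)[of p q] cw by (simp add: lens_offset_def)
  qed
qed

lemma arrangement_unique:
  assumes F: "x \<in> arrangement N \<iota> W" and sub: "set \<iota> \<subseteq> {..<N}"
    and Wsub: "set W \<subseteq> {1..k-1}" and Wlen: "length W = length \<iota>"
  assumes F': "x \<in> arrangement N \<iota>' W'" and sub': "set \<iota>' \<subseteq> {..<N}"
    and Wsub': "set W' \<subseteq> {1..k-1}" and Wlen': "length W' = length \<iota>'"
  shows "\<iota> = \<iota>' \<and> W = W'"
proof -
  note A = arrangement_determined[OF F sub Wsub Wlen] and B = arrangement_determined[OF F' sub' Wsub' Wlen']
  let ?f = "\<lambda>i. - lens_offset x i"
  have "map ?f \<iota> = map ?f \<iota>'"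
    using A(3) B(3) A(1) B(1) by (intro sorted_distinct_set_unique) (auto simp: strict_sorted_iff)
  moreover have "inj_on ?f (set \<iota> \<union> set \<iota>')"
    using A(3) A(1) B(1) by (simp add: strict_sorted_iff distinct_map)
  ultimately have "\<iota> = \<iota>'" by (simp add: inj_on_map_eq_map)
  then show ?thesis using A(2) B(2) by simp
qed

lemma offset_ties_null: "offset_ties N \<in> null_sets unif_seq"
proof -
  let ?X = "{(i, i', j, j'). i < N \<and> i' < N \<and> i \<noteq> i' \<and> j \<in> {1..k-1}
    \<and> j' \<in> {1..k-1}}"
  have "offset_ties N = (\<Union>(i, i', j, j')\<in>?X. {x. x i - x i' = lens_start j - lens_start j'})"
    unfolding offset_ties_def by blast
  moreover have "countable ?X"
  proof (rule countable_finite, rule finite_subset)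
    show "?X \<subseteq> {..<N} \<times> {..<N} \<times> {..k} \<times> {..k}" by auto
  qed auto
  ultimately show ?thesis
    by (auto intro!: null_sets_UN' difference_level_set_null)
qed

section \<open>Moving points between lenses\<close>

lemma lens_borel[measurable]: "lens r0 k j \<in> sets borel"
  by (simp add: lens_def)

definition lens_swap :: "nat \<Rightarrow> nat \<Rightarrow> real \<Rightarrow> real" where
  "lens_swap a b y =
     (if y \<in> lens r0 k a then (lens_start b - lens_start a) + y
      else if y \<in> lens r0 k b then (lens_start a - lens_start b) + y
      else y)"

lemma lens_swap_measurable: "lens_swap a b \<in> borel_measurable borel"
  unfolding lens_swap_def by measurable

lemma lens_shift_iff:
  assumes "a \<in> {1..k-1}" "b \<in> {1..k-1}"
  shows "(lens_start b - lens_start a) + y \<in> lens r0 k b \<longleftrightarrow> y \<in> lens r0 k a"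
  using assms lens_eq_start[of a] lens_eq_start[of b] by auto

lemma lens_swap_same: "lens_swap a a y = y"
  by (simp add: lens_swap_def)

lemma lens_swap_in_lens:
  assumes a: "a \<in> {1..k-1}" and b: "b \<in> {1..k-1}"
  shows "lens_swap a b y \<in> lens r0 k b \<longleftrightarrow> y \<in> lens r0 k a"
proof (cases "a = b")
  case True then show ?thesis by (simp add: lens_swap_same)
next
  case False
  note disj = lens_disjoint[OF a b False]
  show ?thesis
  proof (cases "y \<in> lens r0 k a")
    case True then show ?thesis using lens_shift_iff[OF a b] by (simp add: lens_swap_def)
  next
    case ya: False
    show ?thesis
    proof (cases "y \<in> lens r0 k b")
      case True
      have "(lens_start a - lens_start b) + y \<in> lens r0 k a" using lens_shift_iff[OF b a] True by simp
      then show ?thesis using ya True disj by (auto simp: lens_swap_def)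
    next
      case False then show ?thesis using ya by (simp add: lens_swap_def)
    qed
  qed
qed

lemma lens_swap_offset: "y \<in> lens r0 k a \<Longrightarrow> lens_swap a b y - lens_start b = y -
  lens_start a"
  by (simp add: lens_swap_def)

lemma emeasure_lens_swap_preimage:
  assumes a: "a \<in> {1..k-1}" and b: "b \<in> {1..k-1}" and ab: "a \<noteq> b" and A: "A \<in> sets borel"
  shows "emeasure lborel ({0..1} \<inter> lens_swap a b -` A) = emeasure lborel ({0..1} \<inter> A)"
proof -
  note disj = lens_disjoint[OF a b ab]
  let ?La = "lens r0 k a" and ?Lb = "lens r0 k b"
  have sa: "?La \<subseteq> {0..1}" "?Lb \<subseteq> {0..1}"
    using lens_subset_01[OF a] lens_subset_01[OF b] by auto
  have pA: "lens_swap a b -` A \<in> sets borel"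
    using measurable_sets_borel[OF lens_swap_measurable A] by simp
  have translate: "emeasure lborel ((\<lambda>y. c + y) -` (A \<inter> lens r0 k j)) =
      emeasure lborel ({0..1} \<inter> A \<inter> lens r0 k j)" if "j \<in> {1..k-1}" for c j
  proof -
    have "emeasure lborel ((\<lambda>y. c + y) -` (A \<inter> lens r0 k j)) = emeasure lborel
      (A \<inter> lens r0 k j)"
      using A by (intro emeasure_lborel_translate) simp
    also have "emeasure lborel (A \<inter> lens r0 k j) = emeasure lborel
      ({0..1} \<inter> A \<inter> lens r0 k j)"
      using lens_subset_01[OF that] by (intro arg_cong[where f="emeasure lborel"]) auto
    finally show ?thesis .
  qed
  have "emeasure lborel ({0..1} \<inter> lens_swap a b -` A) =
      emeasure lborel ({0..1} \<inter> lens_swap a b -` A \<inter> ?La) +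
      emeasure lborel ({0..1} \<inter> lens_swap a b -` A \<inter> ?Lb) +
      emeasure lborel ({0..1} \<inter> lens_swap a b -` A - ?La - ?Lb)"
    using pA disj by (intro emeasure_split3) auto
  also have "{0..1} \<inter> lens_swap a b -` A \<inter> ?La =
    (\<lambda>y. (lens_start b - lens_start a) + y) -` (A \<inter> ?Lb)"
    using lens_shift_iff[OF a b] sa by (auto simp: lens_swap_def)
  also have "{0..1} \<inter> lens_swap a b -` A \<inter> ?Lb =
    (\<lambda>y. (lens_start a - lens_start b) + y) -` (A \<inter> ?La)"
  proof -
    have "y \<in> ?Lb \<Longrightarrow> y \<notin> ?La" for y using disj by auto
    then show ?thesis using lens_shift_iff[OF b a] sa by (auto simp: lens_swap_def)
  qed
  also have "{0..1} \<inter> lens_swap a b -` A - ?La - ?Lb = ({0..1} \<inter> A) - ?La - ?Lb"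
    by (auto simp: lens_swap_def)
  also have "emeasure lborel ((\<lambda>y. (lens_start b - lens_start a) + y) -` (A \<inter> ?Lb)) =
      emeasure lborel ({0..1} \<inter> A \<inter> ?Lb)"
    by (rule translate[OF b])
  also have "emeasure lborel ((\<lambda>y. (lens_start a - lens_start b) + y) -` (A \<inter> ?La)) =
      emeasure lborel ({0..1} \<inter> A \<inter> ?La)"
    by (rule translate[OF a])
  also have "emeasure lborel ({0..1} \<inter> A \<inter> ?Lb) + emeasure lborel
    ({0..1} \<inter> A \<inter> ?La) +
      emeasure lborel ({0..1} \<inter> A - ?La - ?Lb) = emeasure lborel ({0..1} \<inter> A)"
    using emeasure_split3[of ?La lborel ?Lb "{0..1} \<inter> A"] A disj by (simp add: add_ac)
  finally show ?thesis .
qed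

lemma distr_lens_swap:
  assumes a: "a \<in> {1..k-1}" and b: "b \<in> {1..k-1}"
  shows "distr unif01 unif01 (lens_swap a b) = unif01"
proof (cases "a = b")
  case True
  have "lens_swap a b = (\<lambda>y. y)" using True by (simp add: fun_eq_iff lens_swap_same)
  then show ?thesis by (simp add: distr_id2)
next
  case False
  show ?thesis
  proof (rule measure_eqI)
    fix A assume "A \<in> sets (distr unif01 unif01 (lens_swap a b))"
    then have A: "A \<in> sets borel" by simp
    have "emeasure (distr unif01 unif01 (lens_swap a b)) A =
        emeasure unif01 (lens_swap a b -` A \<inter> space unif01)"
      using A lens_swap_measurable by (intro emeasure_distr) auto
    also have "\<dots> = emeasure unif01 A"
      using A measurable_sets_borel[OF lens_swap_measurable A]
        emeasure_lens_swap_preimage[OF a b False A] by (simp add: emeasure_unif01)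
    finally show "emeasure (distr unif01 unif01 (lens_swap a b)) A = emeasure unif01 A" .
  qed simp
qed

lemma arrangement_bounded_quantifiers: "arrangement N \<iota> W =
  {x. (\<forall>p\<in>{..<length \<iota>}. x (\<iota> ! p) \<in> lens r0 k (W ! p)) \<and>
      (\<forall>i\<in>{..<N}. i \<notin> set \<iota> \<longrightarrow>
        (\<forall>j\<in>{1..k-1}. x i \<notin> lens r0 k j)) \<and>
      (\<forall>p\<in>{..<length \<iota>}. Suc p < length \<iota> \<longrightarrow> x
        (\<iota> ! Suc p) - lens_start (W ! Suc p) < x (\<iota> ! p) - lens_start (W ! p))}"
  by (auto simp: arrangement_def)

lemma arrangement_sets: "arrangement N \<iota> W \<in> sets unif_seq"
proof -
  have "Measurable.pred unif_seq
    (\<lambda>x. (\<forall>p\<in>{..<length \<iota>}. x (\<iota> ! p) \<in> lens r0 k (W ! p)) \<and>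
      (\<forall>i\<in>{..<N}. i \<notin> set \<iota> \<longrightarrow>
        (\<forall>j\<in>{1..k-1}. x i \<notin> lens r0 k j)) \<and>
      (\<forall>p\<in>{..<length \<iota>}. Suc p < length \<iota> \<longrightarrow> x
        (\<iota> ! Suc p) - lens_start (W ! Suc p) < x (\<iota> ! p) - lens_start (W ! p)))"
    by measurable
  then show ?thesis unfolding arrangement_bounded_quantifiers by (simp add: pred_def)
qed

definition index_of :: "nat list \<Rightarrow> nat \<Rightarrow> nat" where
  "index_of \<iota> i = (THE p. p < length \<iota> \<and> \<iota> ! p = i)"

lemma index_of_nth: "distinct \<iota> \<Longrightarrow> p < length \<iota> \<Longrightarrow>
  index_of \<iota> (\<iota> ! p) = p"
  unfolding index_of_def by (rule the_equality) (auto simp: nth_eq_iff_index_eq)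

definition relabel :: "nat list \<Rightarrow> nat list \<Rightarrow> nat list \<Rightarrow> nat
  \<Rightarrow> real \<Rightarrow> real" where
  "relabel \<iota> W W' i =
     (if i \<in> set \<iota> then lens_swap (W' ! index_of \<iota> i) (W ! index_of \<iota> i) else
       (\<lambda>y. y))"

lemma relabel_nth:
  "distinct \<iota> \<Longrightarrow> p < length \<iota> \<Longrightarrow> relabel \<iota> W W'
    (\<iota> ! p) = lens_swap (W' ! p) (W ! p)"
  by (simp add: relabel_def index_of_nth)

lemma preimage_relabel_arrangement:
  assumes dist: "distinct \<iota>"
    and W: "set W \<subseteq> {1..k-1}" "length W = length \<iota>"
    and W': "set W' \<subseteq> {1..k-1}" "length W' = length \<iota>"
  shows "(\<lambda>x i. relabel \<iota> W W' i (x i)) -` arrangement N \<iota> W = arrangement N \<iota> W'"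
proof -
  have rng: "W ! p \<in> {1..k-1}" "W' ! p \<in> {1..k-1}" if "p < length \<iota>" for p
  proof -
    have "W ! p \<in> set W" "W' ! p \<in> set W'" using that W(2) W'(2) by simp_all
    then show "W ! p \<in> {1..k-1}" "W' ! p \<in> {1..k-1}" using W(1) W'(1) by auto
  qed
  have swap: "relabel \<iota> W W' (\<iota> ! p) y \<in> lens r0 k (W ! p) \<longleftrightarrow> y
    \<in> lens r0 k (W' ! p)"
    if "p < length \<iota>" for p y
    using relabel_nth[OF dist that] lens_swap_in_lens rng[OF that] by simp
  have off: "relabel \<iota> W W' (\<iota> ! p) y - lens_start (W ! p) = y - lens_start (W' ! p)"
    if "p < length \<iota>" "y \<in> lens r0 k (W' ! p)" for p y
    using relabel_nth[OF dist that(1)] lens_swap_offset[OF that(2)] by simp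
  have fixed: "relabel \<iota> W W' i = (\<lambda>y. y)" if "i \<notin> set \<iota>" for i
    using that by (simp add: relabel_def)
  show ?thesis
    by (auto simp: arrangement_def swap off fixed)
qed

lemma emeasure_arrangement_relabel:
  assumes dist: "distinct \<iota>"
    and W: "set W \<subseteq> {1..k-1}" "length W = length \<iota>"
    and W': "set W' \<subseteq> {1..k-1}" "length W' = length \<iota>"
  shows "emeasure unif_seq (arrangement N \<iota> W) = emeasure unif_seq (arrangement N \<iota> W')"
proof -
  let ?t = "relabel \<iota> W W'"
  have tm: "?t i \<in> borel_measurable borel" for i by (simp add: relabel_def lens_swap_measurable)
  have td: "distr unif01 unif01 (?t i) = unif01" for i
  proof (cases "i \<in> set \<iota>")
    case True
    then obtain p where p: "p < length \<iota>" "i = \<iota> ! p" by (auto simp: in_set_conv_nth)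
    have "W ! p \<in> set W" "W' ! p \<in> set W'" using p(1) W(2) W'(2) by simp_all
    then have "W ! p \<in> {1..k-1}" "W' ! p \<in> {1..k-1}" using W(1) W'(1) by auto
    then show ?thesis using relabel_nth[OF dist p(1)] distr_lens_swap p(2) by simp
  qed (simp add: relabel_def distr_id2)
  have "emeasure unif_seq (arrangement N \<iota> W) =
      emeasure (distr unif_seq unif_seq (\<lambda>x i. ?t i (x i))) (arrangement N \<iota> W)"
    using distr_PiM_coordinatewise[OF tm td] by simp
  also have "\<dots> = emeasure unif_seq
    ((\<lambda>x i. ?t i (x i)) -` arrangement N \<iota> W \<inter> space unif_seq)"
    using measurable_PiM_coordinatewise[OF tm] arrangement_sets by (rule emeasure_distr)
  also have "\<dots> = emeasure unif_seq (arrangement N \<iota> W')"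
    using preimage_relabel_arrangement[OF assms] by simp
  finally show ?thesis .
qed

section \<open>Measurability of the events\<close>

lemma lens_count_eq:
  "lens_count r0 k j (N, x) = card {i\<in>{..<N}. x i \<in> lens r0 k j \<and>
    (\<forall>i'\<in>{..<N}. x i' \<in> lens r0 k j \<longrightarrow> i' < i \<longrightarrow> x
    i' \<noteq> x i)}"
proof -
  have "points (N, x) \<inter> lens r0 k j = x ` {i\<in>{..<N}. x i \<in> lens r0 k j}"
    by (auto simp: points_def)
  then have "lens_count r0 k j (N, x) = card (x ` {i\<in>{..<N}. x i \<in> lens r0 k j})"
    by (simp add: lens_count_def)
  also have "\<dots> = card {i\<in>{i\<in>{..<N}. x i \<in> lens r0 k j}.
    \<forall>i'\<in>{i\<in>{..<N}. x i \<in> lens r0 k j}. id i' < id i \<longrightarrow> x i'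
    \<noteq> x i}"
    by (rule card_image_eq_card_first) auto
  also have "{i\<in>{i\<in>{..<N}. x i \<in> lens r0 k j}.
    \<forall>i'\<in>{i\<in>{..<N}. x i \<in> lens r0 k j}. id i' < id i \<longrightarrow> x i' \<noteq> x i}
     = {i\<in>{..<N}. x i \<in> lens r0 k j \<and>
       (\<forall>i'\<in>{..<N}. x i' \<in> lens r0 k j \<longrightarrow> i' < i \<longrightarrow> x i' \<noteq> x i)}"
    by auto
  finally show ?thesis .
qed

definition hop_choice :: "(nat \<Rightarrow> real) \<Rightarrow> (nat \<Rightarrow> nat)
  \<Rightarrow> bool" where
  "hop_choice x p \<longleftrightarrow> adj r0 0 (x (p 1)) \<and>
    (\<forall>j\<in>{1..<k-1}. adj r0 (x (p j)) (x (p (Suc j)))) \<and> adj r0 (x (p (k - 1))) 1"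

lemma hop_paths_eq_image:
  fixes N :: nat and x :: "nat \<Rightarrow> real"
  defines "T \<equiv> {1..k-1} \<rightarrow>\<^sub>E {..<N}"
  shows "hop_paths r0 k (N, x) = chain_path x [0..<N] ` {p\<in>T. hop_choice x p}"
proof (intro set_eqI iffI)
  fix vs assume vs: "vs \<in> hop_paths r0 k (N, x)"
  have ad: "\<And>i. i < k \<Longrightarrow> adj r0 (vs ! i) (vs ! Suc i)" and v0: "vs ! 0 = 0"
    and vk: "vs ! k = 1"
    using vs by (auto simp: hop_paths_def)
  have ex: "\<exists>i. i < N \<and> x i = vs ! j" if j: "j \<in> {1..k-1}" for j
    using hop_path_nth_in_lens[OF vs j] by (auto simp: points_def)
  define p where "p = (\<lambda>j\<in>{1..k-1}. SOME i. i < N \<and> x i = vs ! j)"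
  have pp: "p j < N \<and> x (p j) = vs ! j" if j: "j \<in> {1..k-1}" for j
    using someI_ex[OF ex[OF j]] j by (simp add: p_def)
  have pT: "p \<in> T" using pp by (auto simp: T_def p_def)
  have "vs = chain_path x [0..<N] p" using hop_path_eq_chain_path[OF vs] pp by simp
  moreover have "hop_choice x p"
    unfolding hop_choice_def
  proof (intro conjI ballI)
    show "adj r0 0 (x (p 1))" using ad[of 0] v0 pp[of 1] k_ge_3 by simp
    show "adj r0 (x (p (k - 1))) 1" using ad[of "k - 1"] vk pp[of "k - 1"] k_ge_3 by simp
  next
    fix j assume "j \<in> {1..<k-1}"
    then show "adj r0 (x (p j)) (x (p (Suc j)))" using pp[of j] pp[of "Suc j"] ad[of j] by fastforce
  qed
  ultimately show "vs \<in> chain_path x [0..<N] ` {p\<in>T. hop_choice x p}" using pT by blast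
next
  fix vs assume "vs \<in> chain_path x [0..<N] ` {p\<in>T. hop_choice x p}"
  then obtain p where pT: "p \<in> T" and va: "hop_choice x p" and vs: "vs = chain_path x [0..<N] p"
    by blast
  have pN: "p j < N" if "j \<in> {1..k-1}" for j using pT that by (auto simp: T_def)
  have "chain_path x [0..<N] p \<in> hop_paths r0 k (N, x)"
    using pN va k_ge_3 by (intro chain_path_in_hop_paths) (auto simp: hop_choice_def)
  then show "vs \<in> hop_paths r0 k (N, x)" using vs by simp
qed

lemma chain_path_eq_iff:
  assumes "p \<in> {1..k-1} \<rightarrow>\<^sub>E {..<N}" "p' \<in> {1..k-1} \<rightarrow>\<^sub>E {..<N}"
  shows "chain_path x [0..<N] p' = chain_path x [0..<N] p \<longleftrightarrow>
    (\<forall>j\<in>{1..<k}. x (p' j) = x (p j))"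
proof -
  have "chain_path x [0..<N] p' = chain_path x [0..<N] p \<longleftrightarrow>
      map (\<lambda>j. x ([0..<N] ! p' j)) [1..<k] = map (\<lambda>j. x ([0..<N] ! p j)) [1..<k]"
    by (simp add: chain_path_def)
  also have "\<dots> \<longleftrightarrow>
    (\<forall>j\<in>{1..<k}. x ([0..<N] ! p' j) = x ([0..<N] ! p j))" by (simp add: map_eq_conv)
  also have "\<dots> \<longleftrightarrow> (\<forall>j\<in>{1..<k}. x (p' j) = x (p j))"
  proof -
    have "[0..<N] ! p' j = p' j" "[0..<N] ! p j = p j" if "j \<in> {1..<k}" for j
      using assms that by (auto simp: PiE_def Pi_def)
    then show ?thesis by auto
  qed
  finally show ?thesis .
qed

lemma sigma_k_eq_card_first:
  fixes N :: nat and x :: "nat \<Rightarrow> real"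
  defines "T \<equiv> {1..k-1} \<rightarrow>\<^sub>E {..<N}"
  shows "sigma_k r0 k (N, x) = card {p\<in>T. hop_choice x p \<and>
     (\<forall>p'\<in>T. hop_choice x p' \<longrightarrow> to_nat_on T p' < to_nat_on T p
       \<longrightarrow> (\<exists>j\<in>{1..<k}. x (p' j) \<noteq> x (p j)))}"
proof -
  have fT: "finite T" unfolding T_def by (intro finite_PiE) auto
  have inj: "inj_on (to_nat_on T) {p\<in>T. hop_choice x p}"
    by (rule inj_on_subset[OF inj_on_to_nat_on[OF countable_finite[OF fT]]]) auto
  have "sigma_k r0 k (N, x) = card (chain_path x [0..<N] ` {p\<in>T. hop_choice x p})"
    unfolding sigma_k_def T_def by (simp add: hop_paths_eq_image)
  also have "\<dots> = card {p\<in>{p\<in>T. hop_choice x p}.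
    \<forall>p'\<in>{p\<in>T. hop_choice x p}. to_nat_on T p' < to_nat_on T p \<longrightarrow> chain_path x [0..<N] p'
    \<noteq> chain_path x [0..<N] p}"
    by (rule card_image_eq_card_first[OF _ inj]) (use fT in simp)
  also have "\<dots> = card {p\<in>T. hop_choice x p \<and>
     (\<forall>p'\<in>T. hop_choice x p' \<longrightarrow> to_nat_on T p' < to_nat_on T p
       \<longrightarrow> (\<exists>j\<in>{1..<k}. x (p' j) \<noteq> x (p j)))}"
  proof (rule arg_cong[where f=card])
    show "{p\<in>{p\<in>T. hop_choice x p}. \<forall>p'\<in>{p\<in>T. hop_choice x p}. to_nat_on T
      p' < to_nat_on T p \<longrightarrow> chain_path x [0..<N] p' \<noteq> chain_path x
      [0..<N] p} =
      {p\<in>T. hop_choice x p \<and>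
        (\<forall>p'\<in>T. hop_choice x p' \<longrightarrow> to_nat_on T p' < to_nat_on T p \<longrightarrow> (\<exists>j\<in>{1..<k}. x (p' j)
        \<noteq> x (p j)))}"
      using chain_path_eq_iff unfolding T_def by auto
  qed
  finally show ?thesis .
qed

lemma hop_choice_pred[measurable]: "Measurable.pred unif_seq (\<lambda>x. hop_choice x p)"
  unfolding hop_choice_def adj_def by measurable

lemma lens_count_measurable[measurable]:
  "(\<lambda>x. lens_count r0 k j (N, x)) \<in> measurable unif_seq (count_space UNIV)"
proof (rule measurable_count_space_natI)
  fix c
  show "Measurable.pred unif_seq (\<lambda>x. lens_count r0 k j (N, x) = c)"
    unfolding lens_count_eq by (intro pred_card_eq) auto
qed

lemma sigma_k_measurable[measurable]:
  "(\<lambda>x. sigma_k r0 k (N, x)) \<in> measurable unif_seq (count_space UNIV)"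
proof (rule measurable_count_space_natI)
  fix c
  let ?T = "{1..k-1} \<rightarrow>\<^sub>E {..<N}"
  have "finite ?T" by (intro finite_PiE) auto
  then show "Measurable.pred unif_seq (\<lambda>x. sigma_k r0 k (N, x) = c)"
    unfolding sigma_k_eq_card_first by (intro pred_card_eq) auto
qed

section \<open>The law of the lens word\<close>

definition index_lists :: "nat \<Rightarrow> nat \<Rightarrow> nat list set" where
  "index_lists N M = {\<iota>. distinct \<iota> \<and> set \<iota> \<subseteq> {..<N} \<and> length
    \<iota> = M}"

definition lens_words :: "nat \<Rightarrow> nat list set" where
  "lens_words M = {W. set W \<subseteq> {1..k-1} \<and> length W = M}"

definition arrangements :: "nat \<Rightarrow> nat \<Rightarrow> nat list set \<Rightarrow>
  (nat \<Rightarrow> real) set" where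
  "arrangements N M S = (\<Union>\<iota>\<in>index_lists N M. \<Union>W\<in>S. arrangement N \<iota> W)"

text \<open>By emeasure_arrangement_relabel the measure of an arrangement does not depend on its word,
  so the word replicate M 1 serves as a representative.\<close>

definition arrangement_weight :: "nat \<Rightarrow> nat \<Rightarrow> ennreal" where
  "arrangement_weight N M = (\<Sum>\<iota>\<in>index_lists N M. emeasure unif_seq
    (arrangement N \<iota> (replicate M 1)))"

lemma finite_index_lists: "finite (index_lists N M)"
proof (rule finite_subset)
  show "index_lists N M \<subseteq> {xs. set xs \<subseteq> {..<N} \<and> length xs = M}"
    by (auto simp: index_lists_def)
  show "finite {xs. set xs \<subseteq> {..<N} \<and> length xs = M}" by (rule finite_lists_length_eq) simp
qed

lemma finite_lens_words: "finite (lens_words M)"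
  unfolding lens_words_def by (rule finite_lists_length_eq) simp

lemma arrangements_sets: "finite S \<Longrightarrow> arrangements N M S \<in> sets unif_seq"
  unfolding arrangements_def by (intro sets.finite_UN finite_index_lists arrangement_sets) auto

lemma replicate_1_lens_words: "replicate M 1 \<in> lens_words M"
  using k_ge_3 by (auto simp: lens_words_def)

lemma disjoint_family_arrangement:
  "disjoint_family_on (\<lambda>(\<iota>, W). arrangement N \<iota> W)
    (index_lists N M \<times> lens_words M)"
proof (unfold disjoint_family_on_def, intro ballI impI)
  fix a b assume a: "a \<in> index_lists N M \<times> lens_words M" and b: "b \<in> index_lists N M
    \<times> lens_words M"
    and ab: "a \<noteq> b"
  obtain \<iota> W \<iota>' W' where ab': "a = (\<iota>, W)" "b = (\<iota>', W')" by (cases a, cases b)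
  have "\<iota> = \<iota>' \<and> W = W'" if "x \<in> arrangement N \<iota> W" "x \<in> arrangement
    N \<iota>' W'" for x
    using that a b ab' by (intro arrangement_unique) (auto simp: index_lists_def lens_words_def)
  then show "(\<lambda>(\<iota>, W). arrangement N \<iota> W) a \<inter>
    (\<lambda>(\<iota>, W). arrangement N \<iota> W) b = {}"
    using ab ab' by auto
qed

lemma emeasure_arrangements:
  assumes S: "S \<subseteq> lens_words M" "finite S"
  shows "emeasure unif_seq (arrangements N M S) = of_nat (card S) * arrangement_weight N M"
proof -
  let ?I = "index_lists N M \<times> S"
  let ?F = "\<lambda>(\<iota>, W). arrangement N \<iota> W"
  have e: "arrangements N M S = \<Union> (?F ` ?I)" by (auto simp: arrangements_def)
  have disj: "disjoint_family_on ?F ?I"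
    using S by (auto intro: disjoint_family_on_mono[OF _ disjoint_family_arrangement])
  have "emeasure unif_seq (arrangements N M S) = (\<Sum>a\<in>?I. emeasure unif_seq (?F a))"
    unfolding e using finite_index_lists S disj
    by (intro sum_emeasure[symmetric]) (auto intro: arrangement_sets)
  also have "\<dots> = (\<Sum>(\<iota>, W)\<in>?I. emeasure unif_seq (arrangement N \<iota> W))"
    by (intro sum.cong refl) (auto split: prod.splits)
  also have "\<dots> = (\<Sum>\<iota>\<in>index_lists N M. \<Sum>W\<in>S. emeasure unif_seq
    (arrangement N \<iota> W))"
    by (simp add: sum.cartesian_product)
  also have "\<dots> = (\<Sum>\<iota>\<in>index_lists N M. \<Sum>W\<in>S. emeasure unif_seq
    (arrangement N \<iota> (replicate M 1)))"
  proof (intro sum.cong refl)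
    fix \<iota> W assume "\<iota> \<in> index_lists N M" "W \<in> S"
    then show "emeasure unif_seq (arrangement N \<iota> W) = emeasure unif_seq
      (arrangement N \<iota> (replicate M 1))"
      using S replicate_1_lens_words[of M]
        by (intro emeasure_arrangement_relabel) (auto simp: index_lists_def lens_words_def)
  qed
  also have "\<dots> = of_nat (card S) * arrangement_weight N M"
    by (simp add: arrangement_weight_def sum_distrib_left)
  finally show ?thesis .
qed

definition lens_total :: "(nat \<Rightarrow> nat) \<Rightarrow> nat" where
  "lens_total m = (\<Sum>j\<in>{1..k-1}. m j)"

definition lens_event :: "(nat \<Rightarrow> nat) \<Rightarrow> (nat \<Rightarrow> bool)
  \<Rightarrow> nat \<Rightarrow> (nat \<Rightarrow> real) set" where
  "lens_event m \<Phi> N =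
     {x. \<Phi> (sigma_k r0 k (N, x)) \<and> (\<forall>j\<in>{1..k-1}. lens_count r0 k j (N, x) = m j)}"

lemma lens_event_sets: "lens_event m \<Phi> N \<in> sets unif_seq"
proof -
  have "Measurable.pred unif_seq (\<lambda>x. \<Phi> (sigma_k r0 k (N, x)))"
    using measurable_compose[OF sigma_k_measurable, of \<Phi>] by simp
  then have "Measurable.pred unif_seq
      (\<lambda>x. \<Phi> (sigma_k r0 k (N, x)) \<and>
        (\<forall>j\<in>{1..k-1}. lens_count r0 k j (N, x) = m j))"
    by measurable
  then show ?thesis by (simp add: lens_event_def pred_def)
qed

lemma words_lens_words: "W \<in> words (k - 1) m \<Longrightarrow> W \<in> lens_words (lens_total m)"
proof -
  assume W: "W \<in> words (k - 1) m"
  have "length W = size (letter_mset (k-1) m)"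
    using W unfolding words_eq_permutations by (rule length_finite_permutations_of_multiset)
  also have "\<dots> = lens_total m" by (simp add: letter_mset_def size_multiset_sum lens_total_def)
  finally show ?thesis using W by (simp add: lens_words_def words_def)
qed

lemma arrangement_in_lens_event_iff:
  assumes "\<iota> \<in> index_lists N (lens_total m)" "W \<in> words (k - 1) m" "x \<in>
    arrangement N \<iota> W"
  shows "x \<in> lens_event m \<Phi> N \<longleftrightarrow> \<Phi> (chain_count (k - 1) W)"
proof -
  have sub: "set \<iota> \<subseteq> {..<N}" and w: "set W \<subseteq> {1..k-1}" "length W = length \<iota>"
    using assms(1) words_lens_words[OF assms(2)] by (auto simp: index_lists_def lens_words_def)
  have "lens_count r0 k j (N, x) = m j" if "j \<in> {1..k-1}" for j
    using arrangement_card_lens[OF assms(3) sub w that] assms(2) that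
    by (simp add: lens_count_def points_def words_def)
  moreover have "sigma_k r0 k (N, x) = chain_count (k - 1) W"
    using arrangement_hop_paths[OF assms(3) sub w] by (simp add: sigma_k_def)
  ultimately show ?thesis by (simp add: lens_event_def)
qed

text \<open>Off the null set of offset ties, ordering the points in the lenses by decreasing offset
  exhibits every configuration with the prescribed lens counts as an arrangement.\<close>

lemma lens_event_covered:
  assumes "x \<in> lens_event m \<Phi> N" "x \<notin> offset_ties N"
  shows "\<exists>\<iota>\<in>index_lists N (lens_total m). \<exists>W\<in>words (k - 1) m. x \<in>
    arrangement N \<iota> W"
proof -
  let ?\<iota> = "offset_order N x" and ?W = "map (lens_of x) (offset_order N x)"
  note c = offset_order_arrangement[OF assms(2)]
  have w: "set ?W \<subseteq> {1..k-1}" "length ?W = length ?\<iota>" using c by auto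
  have "count_list ?W j = m j" if "j \<in> {1..k-1}" for j
    using arrangement_card_lens[OF c(5) c(3) w that] assms(1) that
    by (simp add: lens_count_def points_def lens_event_def)
  then have Wm: "?W \<in> words (k - 1) m" using w by (simp add: words_def)
  then have "length ?W = lens_total m" using words_lens_words[OF Wm] by (simp add: lens_words_def)
  then have "?\<iota> \<in> index_lists N (lens_total m)" using c by (simp add: index_lists_def)
  then show ?thesis using Wm c(5) by blast
qed

lemma emeasure_lens_event:
  "emeasure unif_seq (lens_event m \<Phi> N) =
     of_nat (card {W \<in> words (k - 1) m. \<Phi> (chain_count (k - 1) W)}) * arrangement_weight N
       (lens_total m)"
proof -
  let ?S = "{W \<in> words (k - 1) m. \<Phi> (chain_count (k - 1) W)}"
  have S: "finite ?S" "?S \<subseteq> lens_words (lens_total m)"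
    using finite_words words_lens_words by auto
  have "emeasure unif_seq (lens_event m \<Phi> N) = emeasure unif_seq (arrangements N (lens_total m) ?S)"
  proof (rule emeasure_sandwich[OF arrangements_sets[OF S(1)] lens_event_sets offset_ties_null])
    show "arrangements N (lens_total m) ?S \<subseteq> lens_event m \<Phi> N"
    proof
      fix x assume "x \<in> arrangements N (lens_total m) ?S"
      then obtain \<iota> W where "\<iota> \<in> index_lists N (lens_total m)" "W \<in> ?S" "x
        \<in> arrangement N \<iota> W"
        by (auto simp: arrangements_def)
      then show "x \<in> lens_event m \<Phi> N" using arrangement_in_lens_event_iff by blast
    qed
    show "lens_event m \<Phi> N \<subseteq> arrangements N (lens_total m) ?S \<union> offset_ties N"
    proof
      fix x assume x: "x \<in> lens_event m \<Phi> N"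
      show "x \<in> arrangements N (lens_total m) ?S \<union> offset_ties N"
      proof (cases "x \<in> offset_ties N")
        case False
        then obtain \<iota> W where "\<iota> \<in> index_lists N (lens_total m)" "W \<in> words (k - 1) m"
            "x \<in> arrangement N \<iota> W"
          using lens_event_covered[OF x] by blast
        moreover from this have "\<Phi> (chain_count (k - 1) W)"
          using arrangement_in_lens_event_iff x by blast
        ultimately show ?thesis by (auto simp: arrangements_def)
      qed simp
    qed
  qed
  also have "\<dots> = of_nat (card ?S) * arrangement_weight N (lens_total m)"
    using S by (intro emeasure_arrangements) auto
  finally show ?thesis .
qed

lemma emeasure_all_in_lens_pos:
  assumes j: "j \<in> {1..k-1}"
  shows "0 < emeasure unif_seq (prod_emb UNIV (\<lambda>_. unif01) {..<M}
    (Pi\<^sub>E {..<M} (\<lambda>_. lens r0 k j)))"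
proof -
  have "emeasure unif01 (lens r0 k j) = emeasure lborel ({0..1} \<inter> lens r0 k j)"
    by (rule emeasure_unif01) simp
  also have "{0..1} \<inter> lens r0 k j = lens r0 k j" using lens_subset_01[OF j] by auto
  also have "emeasure lborel (lens r0 k j) = ennreal lens_width"
  proof -
    have "j \<le> k" using j by auto
    then show ?thesis using lens_eq_start lens_width_pos by simp
  qed
  finally have "emeasure unif01 (lens r0 k j) = ennreal lens_width" .
  then have "emeasure unif_seq (prod_emb UNIV (\<lambda>_. unif01) {..<M}
    (Pi\<^sub>E {..<M} (\<lambda>_. lens r0 k j))) =
      ennreal (lens_width ^ M)"
    using lens_width_pos by (subst unif_prod.emeasure_PiM_emb) (auto simp: ennreal_power)
  then show ?thesis using lens_width_pos by simp
qed

lemma arrangement_weight_pos: "arrangement_weight M M > 0"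
proof -
  have one: "1 \<in> {1..k-1}" using k_ge_3 by simp
  let ?E = "prod_emb UNIV (\<lambda>_. unif01) {..<M} (Pi\<^sub>E {..<M} (\<lambda>_. lens r0 k 1))"
  have "?E \<subseteq> arrangements M M (lens_words M) \<union> offset_ties M"
  proof
    fix x assume xE: "x \<in> ?E"
    show "x \<in> arrangements M M (lens_words M) \<union> offset_ties M"
    proof (cases "x \<in> offset_ties M")
      case False
      note c = offset_order_arrangement[OF False]
      have xi: "x i \<in> lens r0 k 1" if "i < M" for i using xE that
        by (auto simp: prod_emb_def PiE_def Pi_def)
      have "lens_points M x = {..<M}"
      proof (intro set_eqI iffI)
        fix i assume "i \<in> {..<M}"
        then show "i \<in> lens_points M x" using xi one unfolding lens_points_def by blast
      qed (auto simp: lens_points_def)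
      then have len: "length (offset_order M x) = M" using c(1) c(2) distinct_card by fastforce
      then have "offset_order M x \<in> index_lists M M" using c by (simp add: index_lists_def)
      moreover have "map (lens_of x) (offset_order M x) \<in> lens_words M"
        using c len by (simp add: lens_words_def)
      ultimately show ?thesis using c(5) by (auto simp: arrangements_def)
    qed simp
  qed
  moreover have "arrangements M M (lens_words M) \<union> offset_ties M \<in> sets unif_seq"
    by (intro sets.Un arrangements_sets finite_lens_words null_setsD2 offset_ties_null)
  ultimately have "emeasure unif_seq ?E \<le> emeasure unif_seq
    (arrangements M M (lens_words M) \<union> offset_ties M)"
    by (intro emeasure_mono)
  also have "\<dots> = emeasure unif_seq (arrangements M M (lens_words M))"
    by (intro emeasure_Un_null_set arrangements_sets finite_lens_words offset_ties_null)
  also have "\<dots> = of_nat (card (lens_words M)) * arrangement_weight M M"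
    by (rule emeasure_arrangements) (auto simp: finite_lens_words)
  finally have "emeasure unif_seq ?E \<le> of_nat (card (lens_words M)) * arrangement_weight M M" .
  with emeasure_all_in_lens_pos[OF one, of M]
  have "0 < of_nat (card (lens_words M)) * arrangement_weight M M" by (rule less_le_trans)
  then show ?thesis by (metis mult_zero_right not_gr_zero)
qed
end

section \<open>The Poisson point process\<close>

lemma space_PPP: "space (PPP lam) = UNIV"
  by (simp add: PPP_def space_pair_measure)

lemma sets_PPP: "sets (PPP lam) = sets (count_space UNIV \<Otimes>\<^sub>M unif_seq)"
  unfolding PPP_def by (rule sets_pair_measure_cong) (simp_all add: sets_measure_pmf_count_space)

lemma PPP_event_sets:
  assumes "\<And>N. {x. P N x} \<in> sets unif_seq"
  shows "{\<omega> \<in> space (PPP lam). P (fst \<omega>) (snd \<omega>)} \<in> sets (PPP lam)"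
proof -
  have "(\<lambda>\<omega>. P (fst \<omega>) (snd \<omega>)) \<in> measurable
    (count_space UNIV \<Otimes>\<^sub>M unif_seq) (count_space UNIV)"
  proof (rule measurable_pair_measure_countable1)
    fix N :: nat
    have "Measurable.pred unif_seq (\<lambda>x. P N x)" using assms[of N] by (simp add: pred_def)
    then show "(\<lambda>y. P (fst (N, y)) (snd (N, y))) \<in> measurable unif_seq (count_space UNIV)" by simp
  qed simp
  then have "Measurable.pred (PPP lam) (\<lambda>\<omega>. P (fst \<omega>) (snd \<omega>))"
    using measurable_cong_sets[OF sets_PPP refl] by blast
  then show ?thesis by (simp add: pred_def)
qed

lemma emeasure_PPP_event:
  assumes "\<And>N. {x. P N x} \<in> sets unif_seq"
  shows "emeasure (PPP lam) {\<omega> \<in> space (PPP lam). P (fst \<omega>) (snd \<omega>)} =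
     (\<integral>\<^sup>+ N. emeasure unif_seq {x. P N x} \<partial>measure_pmf (poisson_pmf lam))"
proof -
  have s: "{\<omega> \<in> space (PPP lam). P (fst \<omega>) (snd \<omega>)} \<in> sets
    (measure_pmf (poisson_pmf lam) \<Otimes>\<^sub>M unif_seq)"
    using PPP_event_sets[OF assms, of lam] by (simp add: PPP_def)
  have "emeasure (PPP lam) {\<omega> \<in> space (PPP lam). P (fst \<omega>) (snd \<omega>)} =
      (\<integral>\<^sup>+ N. emeasure unif_seq
        (Pair N -` {\<omega> \<in> space (PPP lam). P (fst \<omega>) (snd \<omega>)}) \<partial>measure_pmf (poisson_pmf lam))"
    unfolding PPP_def by (rule unif_prod.P.emeasure_pair_measure_alt[OF s[unfolded PPP_def]])
  also have "\<dots> = (\<integral>\<^sup>+ N. emeasure unif_seq {x. P N x} \<partial>measure_pmf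
    (poisson_pmf lam))"
    by (simp add: space_PPP)
  finally show ?thesis .
qed

lemma prob_space_PPP: "prob_space (PPP lam)"
  unfolding PPP_def by (intro prob_space_pair prob_space_measure_pmf prob_space_unif_seq)

context lens_geometry begin

lemma emeasure_PPP_lens_event:
  "emeasure (PPP lam)
     {\<omega> \<in> space (PPP lam). \<Phi> (sigma_k r0 k \<omega>) \<and>
       (\<forall>j\<in>{1..k-1}. lens_count r0 k j \<omega> = m j)} =
   of_nat (card {W \<in> words (k - 1) m. \<Phi> (chain_count (k - 1) W)}) *
   (\<integral>\<^sup>+ N. arrangement_weight N (lens_total m) \<partial>measure_pmf (poisson_pmf lam))"
proof -
  have "emeasure (PPP lam)
      {\<omega> \<in> space (PPP lam). \<Phi> (sigma_k r0 k \<omega>) \<and>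
        (\<forall>j\<in>{1..k-1}. lens_count r0 k j \<omega> = m j)} =
      emeasure (PPP lam) {\<omega> \<in> space (PPP lam). snd \<omega> \<in> lens_event m \<Phi>
        (fst \<omega>)}"
    by (simp add: lens_event_def)
  also have "\<dots> = (\<integral>\<^sup>+ N. emeasure unif_seq (lens_event m \<Phi> N)
    \<partial>measure_pmf (poisson_pmf lam))"
    using emeasure_PPP_event[of "\<lambda>N x. x \<in> lens_event m \<Phi> N"] lens_event_sets by simp
  finally show ?thesis by (simp add: emeasure_lens_event nn_integral_cmult)
qed

lemma nn_integral_arrangement_weight_pos:
  assumes "0 < lam"
  shows "0 < (\<integral>\<^sup>+ N. arrangement_weight N M \<partial>measure_pmf (poisson_pmf lam))"
proof -
  have "0 < ennreal (pmf (poisson_pmf lam) M) * arrangement_weight M M"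
    using assms arrangement_weight_pos by (simp add: ennreal_zero_less_mult_iff pmf_poisson)
  also have "\<dots> \<le> (\<integral>\<^sup>+ N. arrangement_weight N M \<partial>measure_pmf
    (poisson_pmf lam))"
    by (rule nn_integral_pmf_ge)
  finally show ?thesis .
qed

lemma cond_prob_PPP_lens_counts:
  assumes "0 < lam"
  shows "cond_prob (PPP lam) (\<lambda>\<omega>. sigma_k r0 k \<omega> = n)
           (\<lambda>\<omega>. \<forall>j\<in>{1..k-1}. lens_count r0 k j \<omega> = m j)
         = real (card {W \<in> words (k - 1) m. chain_count (k - 1) W = n}) / real (card (words (k - 1) m))"
proof (rule prob_space.cond_prob_eq_ratio[OF prob_space_PPP])
  let ?I = "\<integral>\<^sup>+ N. arrangement_weight N (lens_total m) \<partial>measure_pmf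
    (poisson_pmf lam)"
  show "emeasure (PPP lam) {\<omega> \<in> space (PPP lam).
      sigma_k r0 k \<omega> = n \<and> (\<forall>j\<in>{1..k-1}. lens_count r0 k j \<omega> = m j)} =
    of_nat (card {W \<in> words (k - 1) m. chain_count (k - 1) W = n}) * ?I"
    by (rule emeasure_PPP_lens_event)
  show "emeasure (PPP lam) {\<omega> \<in> space (PPP lam). \<forall>j\<in>{1..k-1}. lens_count r0
    k j \<omega> = m j} =
    of_nat (card (words (k - 1) m)) * ?I"
    using emeasure_PPP_lens_event[of lam "\<lambda>_. True" m] by simp
  show "0 < ?I" by (rule nn_integral_arrangement_weight_pos[OF assms])
qed (rule card_words_pos)

end

theorem theorem2p1:
  fixes lam r0 :: real and k n :: nat and m :: "nat \<Rightarrow> nat"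
  assumes "lam > 0" and "k \<ge> 3"
    and "1 / real k < r0" and "r0 < 1 / real (k - 1)"
  shows "cond_prob (PPP lam) (\<lambda>\<omega>. sigma_k r0 k \<omega> = n)
           (\<lambda>\<omega>. \<forall>j\<in>{1..k-1}. lens_count r0 k j \<omega> = m j)
         = (1 / multinom (map m [1..<k])) *
           (\<Sum>w\<in>words (k - 2) m.
              \<Sum>P\<in>{P \<in> words_ab (m (k - 2)) (m (k - 1)).
                     (\<Sum>r=0..m (k - 2). S_count (k - 2) w r * pi_star True False P r) = n}.
                \<Prod>r=0..m (k - 2).
                  real ((pi_star True False P r + (\<Sum>l=1..k-3. pi_star (k - 2) l w r))
                         choose (pi_star True False P r)))"
proof -
  interpret lens_geometry r0 k using assms by unfold_locales auto
  have d: "1 \<le> k - 2" and e: "Suc (k - 2) = k - 1" "k - 2 - 1 = k - 3" "Suc (k - 1) = k"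
    using assms by auto
  show ?thesis
    using cond_prob_PPP_lens_counts[OF assms(1), of n m]
      sum_binom_weight_eq_card_words[OF d, of m n, unfolded e]
      card_words_multinom[of "k - 1" m, unfolded e]
    by simp
qed

end
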